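(* Consider the hybrid system $\dot x\in F(x)$, $x\in C$; $x^+\in G(x)$, $x\in D$, satisfying the hybrid basic conditions (A1)–(A3) below, and suppose that $G(D)\cap D=\emptyset$, $G(D)\subseteq C$, $G$ is single-valued and proper, and $-F(x)\cap T_C(x)=\emptyset$ for all $x\in C\cap G(D)$. Let $\bar K\in\mathbb{R}$. If $D$ is bounded, then for every $\epsilon_4>0$ there exists $\epsilon_3>0$ such that for any solution $\phi$ and any $(t,j)\in\operatorname{dom}\phi$ with $j\in\{1,2,\dots\}$ and $\phi(t,j)\in(C\cap G(D))+\mathcal B_{\epsilon_3}$, there exists $t'\in[t-\epsilon_4,t]$ with $(t',j)\in\operatorname{dom}\phi$ and $\phi(t',j)\in C\cap G(D)$. If $D$ is unbounded, then for every $\epsilon_4>0$ there exists $\epsilon_3>0$ such that the same conclusion holds for any solution $\phi$ and any $(t,j)\in\operatorname{dom}\phi$ with $j\ge1$, $\phi(t,j)\in(C\cap G(D))+\mathcal B_{\epsilon_3}$ and additionally $\phi(t,j)\in\mathcal B_{\bar K}$.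
   Context: $\mathcal B_s=\{x\in\mathbb{R}^n:\|x\|\le s\}$ (Euclidean norm), $S_1+S_2=\{y_1+y_2:y_i\in S_i\}$. (A1) $C,D\subseteq\mathbb{R}^n$ closed; (A2) $F:\mathbb{R}^n\rightrightarrows\mathbb{R}^n$ outer semicontinuous and locally bounded relative to $C$, $C\subseteq\{x:F(x)\neq\emptyset\}$, $F(x)$ convex for $x\in C$; (A3) $G:\mathbb{R}^n\rightrightarrows\mathbb{R}^n$ outer semicontinuous and locally bounded relative to $D$, $D\subseteq\{x:G(x)\ne\emptyset\}$. Solutions are functions on hybrid time domains (subsets of $\mathbb{R}_{\ge0}\times\mathbb{N}$ that are unions of intervals $[t_j,t_{j+1}]\times\{j\}$ with $0=t_0\le t_1\le\cdots$), locally absolutely continuous in $t$ for fixed $j$, with $\phi(0,0)\in C\cup D$, $\phi(t,j)\in C$ and $\dot\phi\in F(\phi)$ a.e. during flow, and $\phi(t,j)\in D$, $\phi(t,j+1)\in G(\phi(t,j))$ at jumps. $T_C(x)$ is the Bouligand tangent cone to $C$ at $x$. $G$ proper means preimages of compact sets are compact. *)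

theory Defs
  imports "HOL-Analysis.Analysis"
begin

definition Bset :: "real \<Rightarrow> 'a::real_normed_vector set" where
  "Bset s = {x. norm x \<le> s}"

definition msum :: "'a::real_normed_vector set \<Rightarrow> 'a set \<Rightarrow> 'a set" where
  "msum S1 S2 = {y1 + y2 | y1 y2. y1 \<in> S1 \<and> y2 \<in> S2}"

definition osc_rel :: "('a::real_normed_vector \<Rightarrow> 'b::real_normed_vector set) \<Rightarrow> 'a set \<Rightarrow> bool" where
  "osc_rel F S \<longleftrightarrow> (\<forall>x\<in>S. \<forall>xs ys y. (\<forall>i. xs i \<in> S \<and> ys i \<in> F (xs i)) \<and>
      xs \<longlonglongrightarrow> x \<and> ys \<longlonglongrightarrow> y \<longrightarrow> y \<in> F x)"

definition locbdd_rel :: "('a::real_normed_vector \<Rightarrow> 'b::real_normed_vector set) \<Rightarrow> 'a set \<Rightarrow> bool" where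
  "locbdd_rel F S \<longleftrightarrow> (\<forall>x\<in>S. \<exists>U. open U \<and> x \<in> U \<and> bounded (\<Union>z\<in>U \<inter> S. F z))"

definition tangent_cone :: "'a::real_normed_vector set \<Rightarrow> 'a \<Rightarrow> 'a set" where
  "tangent_cone C x = {v. \<exists>(t::nat \<Rightarrow> real) w. (\<forall>i. t i > 0 \<and> x + t i *\<^sub>R w i \<in> C) \<and>
      t \<longlonglongrightarrow> 0 \<and> w \<longlonglongrightarrow> v}"

definition img :: "('a \<Rightarrow> 'b set) \<Rightarrow> 'a set \<Rightarrow> 'b set" where
  "img G D = (\<Union>x\<in>D. G x)"

definition hybrid_basic_conditions ::
  "'a::euclidean_space set \<Rightarrow> ('a \<Rightarrow> 'a set) \<Rightarrow> 'a set \<Rightarrow> ('a \<Rightarrow> 'a set) \<Rightarrow> bool" where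
  "hybrid_basic_conditions C F D G \<longleftrightarrow>
     closed C \<and> closed D \<and>
     osc_rel F C \<and> locbdd_rel F C \<and> (\<forall>x\<in>C. F x \<noteq> {} \<and> convex (F x)) \<and>
     osc_rel G D \<and> locbdd_rel G D \<and> (\<forall>x\<in>D. G x \<noteq> {})"

definition hybrid_time_domain :: "(real \<times> nat) set \<Rightarrow> bool" where
  "hybrid_time_domain E \<longleftrightarrow> E \<subseteq> {0..} \<times> UNIV \<and>
     (\<forall>T J. (T, J) \<in> E \<longrightarrow>
        (\<exists>tt::nat \<Rightarrow> real. tt 0 = 0 \<and> (\<forall>j\<le>J. tt j \<le> tt (Suc j)) \<and>
           E \<inter> ({0..T} \<times> {..J}) = (\<Union>j\<le>J. {tt j..tt (Suc j)} \<times> {j})))"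

definition abs_cont_on_interval :: "(real \<Rightarrow> 'a::real_normed_vector) \<Rightarrow> real \<Rightarrow> real \<Rightarrow> bool" where
  "abs_cont_on_interval f a b \<longleftrightarrow> (\<forall>\<epsilon>>0. \<exists>\<delta>>0. \<forall>(n::nat) (l::nat \<Rightarrow> real) (r::nat \<Rightarrow> real).
      (\<forall>k<n. a \<le> l k \<and> l k \<le> r k \<and> r k \<le> b) \<and>
      (\<forall>k<n. \<forall>m<n. k \<noteq> m \<longrightarrow> r k \<le> l m \<or> r m \<le> l k) \<and>
      (\<Sum>k<n. r k - l k) < \<delta> \<longrightarrow> (\<Sum>k<n. norm (f (r k) - f (l k))) < \<epsilon>)"

definition loc_abs_cont_on :: "(real \<Rightarrow> 'a::real_normed_vector) \<Rightarrow> real set \<Rightarrow> bool" where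
  "loc_abs_cont_on f I \<longleftrightarrow> (\<forall>a b. a \<le> b \<and> {a..b} \<subseteq> I \<longrightarrow> abs_cont_on_interval f a b)"

definition is_solution ::
  "'a::euclidean_space set \<Rightarrow> ('a \<Rightarrow> 'a set) \<Rightarrow> 'a set \<Rightarrow> ('a \<Rightarrow> 'a set) \<Rightarrow>
   (real \<times> nat) set \<Rightarrow> (real \<Rightarrow> nat \<Rightarrow> 'a) \<Rightarrow> bool" where
  "is_solution C F D G E \<phi> \<longleftrightarrow>
     hybrid_time_domain E \<and> (0, 0) \<in> E \<and> \<phi> 0 0 \<in> C \<union> D \<and>
     (\<forall>j. loc_abs_cont_on (\<lambda>t. \<phi> t j) {t. (t, j) \<in> E}) \<and>
     (\<forall>j. interior {t. (t, j) \<in> E} \<noteq> {} \<longrightarrow>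
        (\<forall>t\<in>interior {t. (t, j) \<in> E}. \<phi> t j \<in> C) \<and>
        (\<exists>N. negligible N \<and> (\<forall>t\<in>interior {t. (t, j) \<in> E} - N.
            \<exists>v. ((\<lambda>s. \<phi> s j) has_vector_derivative v) (at t) \<and> v \<in> F (\<phi> t j)))) \<and>
     (\<forall>t j. (t, j) \<in> E \<and> (t, Suc j) \<in> E \<longrightarrow> \<phi> t j \<in> D \<and> \<phi> t (Suc j) \<in> G (\<phi> t j))"

definition proper_setmap_on :: "('a::euclidean_space \<Rightarrow> 'b::euclidean_space set) \<Rightarrow> 'a set \<Rightarrow> bool" where
  "proper_setmap_on G D \<longleftrightarrow> (\<forall>K. compact K \<longrightarrow> compact {x\<in>D. G x \<inter> K \<noteq> {}})"

definition single_valued_on :: "('a \<Rightarrow> 'b set) \<Rightarrow> 'a set \<Rightarrow> bool" where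
  "single_valued_on G D \<longleftrightarrow> (\<forall>x\<in>D. \<exists>y. G x = {y})"

end

theory Submission
  imports Defs
begin

(* Fix x in the intersection of C and G(D). If flow arcs of length eps4 could end arbitrarily
   close to x, pick arcs ending within h^2 of x with h -> 0. Local boundedness of F keeps them
   within O(h) of x during their last h time units, so the backward difference quotients
   (psi(b - h) - x) / h accumulate at a vector w of the tangent cone T_C(x). The mean slope of an
   absolutely continuous arc lies in every closed convex set containing its derivative almost
   everywhere, so upper semicontinuity of F at x gives -w in F(x), contradicting the tangency
   hypothesis. Compactness of G(D) (for unbounded D: of the part of G(D) near the ball of radius
   Kbar + 1, by properness of G) makes the distance by which such arcs miss x uniform; this is eps3.
   A solution at (t, j) with j >= 1 has jumped into G(D), a subset of C, at an earlier time with the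
   same j; if that jump happened before t - eps4, the solution flowed throughout [t - eps4, t] and
   cannot be eps3-close to the intersection of C and G(D) at time t. *)

section \<open>Tagged divisions of real intervals\<close>

lemma negligible_imp_open_superset_measure_less:
  assumes "negligible S" "e > 0"
  obtains T where "open T" "S \<subseteq> T" "T \<in> lmeasurable" "measure lebesgue T < e"
proof -
  have S: "S \<in> lmeasurable" "measure lebesgue S = 0"
    using assms(1) negligible_iff_measure by blast+
  obtain T where T: "open T" "S \<subseteq> T" "T - S \<in> lmeasurable" "emeasure lebesgue (T - S) < ennreal e"
    using sets_lebesgue_outer_open[OF fmeasurableD[OF S(1)] assms(2)] by blast
  have T_eq: "T = (T - S) \<union> S"
    using T(2) by blast
  have "T \<in> lmeasurable"
    by (metis T_eq T(3) S(1) fmeasurable.Un)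
  moreover have "measure lebesgue T \<le> measure lebesgue (T - S) + measure lebesgue S"
    by (metis T_eq T(3) S(1) measure_Un_le fmeasurableD)
  moreover have "measure lebesgue (T - S) < e"
    using T(3,4) by (metis emeasure_eq_measure2 ennreal_less_iff measure_nonneg)
  ultimately show ?thesis
    using that T(1,2) S(2) by force
qed

lemma tagged_partial_division_of_real_memE:
  assumes "p tagged_partial_division_of {a..b::real}" "(x, K) \<in> p"
  obtains u v where "K = {u..v}" "u \<le> x" "x \<le> v" "a \<le> u" "v \<le> b" "Inf K = u" "Sup K = v"
proof -
  obtain u v where K: "K = cbox u v"
    using tagged_partial_division_ofD(4)[OF assms] by blast
  have "x \<in> K" "K \<subseteq> {a..b}"
    using tagged_partial_division_ofD(2,3)[OF assms] by auto
  then show ?thesis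
    using that[of u v] K by auto
qed

lemma tagged_partial_division_of_real_nondegenerate_disjoint:
  assumes "p tagged_partial_division_of {a..b::real}" "(x1, K1) \<in> p" "(x2, K2) \<in> p"
    and "(x1, K1) \<noteq> (x2, K2)" "Inf K1 < Sup K1" "Inf K2 < Sup K2"
  shows "Sup K1 \<le> Inf K2 \<or> Sup K2 \<le> Inf K1"
proof (rule ccontr)
  obtain u1 v1 where K1: "K1 = {u1..v1}" "Inf K1 = u1" "Sup K1 = v1"
    using tagged_partial_division_of_real_memE[OF assms(1,2)] by metis
  obtain u2 v2 where K2: "K2 = {u2..v2}" "Inf K2 = u2" "Sup K2 = v2"
    using tagged_partial_division_of_real_memE[OF assms(1,3)] by metis
  assume "\<not> ?thesis"
  then have "(max u1 u2 + min v1 v2) / 2 \<in> interior K1 \<inter> interior K2"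
    using K1 K2 assms(5,6) by auto
  then show False
    using tagged_partial_division_ofD(5)[OF assms(1-4)] by blast
qed

lemma tagged_partial_division_of_real_sum_length_le_measure:
  assumes "p tagged_partial_division_of {a..b::real}" "\<Union>(snd ` p) \<subseteq> T" "T \<in> lmeasurable"
  shows "(\<Sum>(x, K)\<in>p. Sup K - Inf K) \<le> measure lebesgue T"
proof -
  have div: "snd ` p division_of \<Union>(snd ` p)"
    using assms(1) partial_division_of_tagged_division by blast
  have "(\<Sum>(x, K)\<in>p. Sup K - Inf K) = (\<Sum>(x, K)\<in>p. measure lebesgue K)"
  proof (intro sum.cong refl)
    fix xK assume "xK \<in> p"
    moreover obtain x K where "xK = (x, K)" by fastforce
    ultimately obtain u v where "K = {u..v}" "u \<le> v" "Inf K = u" "Sup K = v"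
      using tagged_partial_division_of_real_memE[OF assms(1)] by (metis order.trans)
    then show "(case xK of (x, K) \<Rightarrow> Sup K - Inf K) = (case xK of (x, K) \<Rightarrow> measure lebesgue K)"
      using \<open>xK = (x, K)\<close> by simp
  qed
  also have "\<dots> = (\<Sum>K\<in>snd ` p. measure lebesgue K)"
    by (rule sum.over_tagged_division_lemma[OF tagged_partial_division_of_Union_self[OF assms(1)]])
      (simp add: content_eq_0_interior)
  also have "\<dots> = measure lebesgue (\<Union>(snd ` p))"
    using content_division[OF div] .
  also have "\<dots> \<le> measure lebesgue T"
    using lmeasurable_division[OF div] assms(2,3) by (intro measure_mono_fmeasurable) auto
  finally show ?thesis .
qed

lemma tagged_partial_division_of_real_enumerate:
  assumes p: "p tagged_partial_division_of {a..b::real}"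
  obtains n :: nat and l r :: "nat \<Rightarrow> real"
  where "\<forall>k<n. a \<le> l k \<and> l k \<le> r k \<and> r k \<le> b"
    "\<forall>k<n. \<forall>m<n. k \<noteq> m \<longrightarrow> r k \<le> l m \<or> r m \<le> l k"
    "\<And>f :: real \<Rightarrow> real \<Rightarrow> real. (\<And>y. f y y = 0) \<Longrightarrow>
      (\<Sum>k<n. f (r k) (l k)) = (\<Sum>(x, K)\<in>p. f (Sup K) (Inf K))"
proof -
  have elem: "\<exists>u v. K = {u..v} \<and> a \<le> u \<and> u \<le> v \<and> v \<le> b \<and> Inf K = u \<and> Sup K = v"
    if "(x, K) \<in> p" for x K
    using tagged_partial_division_of_real_memE[OF p that] by (metis order.trans)
  \<comment> \<open>Degenerate intervals may occur several times in a division; they contribute nothing.\<close>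
  define Q where "Q = {(x, K)\<in>p. Inf K < Sup K}"
  have "finite p"
    using p by (rule tagged_partial_division_ofD(1))
  moreover have "Q \<subseteq> p"
    unfolding Q_def by auto
  ultimately have "finite Q"
    by (rule finite_subset[rotated])
  have degenerate: "Sup K = Inf K" if "(x, K) \<in> p - Q" for x K
    using that elem[of x K] unfolding Q_def by force
  obtain e where e: "bij_betw e {..<card Q} Q"
    using ex_bij_betw_nat_finite[OF \<open>finite Q\<close>] atLeast0LessThan by metis
  define l where "l k = Inf (snd (e k))" for k
  define r where "r k = Sup (snd (e k))" for k
  have eQ: "e k \<in> Q" if "k < card Q" for k
    using e that unfolding bij_betw_def by auto
  show ?thesis
  proof (rule that[of "card Q" l r])
    show "\<forall>k<card Q. a \<le> l k \<and> l k \<le> r k \<and> r k \<le> b"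
    proof (intro allI impI)
      fix k assume "k < card Q"
      then have "(fst (e k), snd (e k)) \<in> p"
        using eQ \<open>Q \<subseteq> p\<close> by auto
      then show "a \<le> l k \<and> l k \<le> r k \<and> r k \<le> b"
        unfolding l_def r_def using elem by blast
    qed
    show "\<forall>k<card Q. \<forall>m<card Q. k \<noteq> m \<longrightarrow> r k \<le> l m \<or> r m \<le> l k"
    proof (intro allI impI)
      fix k m assume km: "k < card Q" "m < card Q" "k \<noteq> m"
      then have "e k \<noteq> e m"
        using e unfolding bij_betw_def inj_on_def by auto
      moreover obtain x1 K1 x2 K2 where "e k = (x1, K1)" "e m = (x2, K2)"
        by fastforce
      moreover have "e k \<in> Q" "e m \<in> Q"
        using eQ km by auto
      ultimately show "r k \<le> l m \<or> r m \<le> l k"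
        unfolding l_def r_def Q_def
        using tagged_partial_division_of_real_nondegenerate_disjoint[OF p, of x1 K1 x2 K2] by auto
    qed
    fix f :: "real \<Rightarrow> real \<Rightarrow> real" assume "\<And>y. f y y = 0"
    have "(\<Sum>k<card Q. f (r k) (l k)) = (\<Sum>(x, K)\<in>Q. f (Sup K) (Inf K))"
      using sum.reindex_bij_betw[OF e, of "\<lambda>(x, K). f (Sup K) (Inf K)"]
      unfolding l_def r_def by (simp add: case_prod_beta)
    also have "\<dots> = (\<Sum>(x, K)\<in>p. f (Sup K) (Inf K))"
      using \<open>finite p\<close> \<open>Q \<subseteq> p\<close> degenerate \<open>\<And>y. f y y = 0\<close>
      by (intro sum.mono_neutral_left) auto
    finally show "(\<Sum>k<card Q. f (r k) (l k)) = (\<Sum>(x, K)\<in>p. f (Sup K) (Inf K))" .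
  qed
qed

section \<open>Absolutely continuous functions\<close>

lemma abs_cont_on_interval_tagged_partial_division:
  assumes "abs_cont_on_interval g a b" "\<epsilon> > 0"
  obtains \<eta> where "\<eta> > 0"
    "\<And>p. p tagged_partial_division_of {a..b} \<Longrightarrow> (\<Sum>(x, K)\<in>p. Sup K - Inf K) < \<eta> \<Longrightarrow>
      (\<Sum>(x, K)\<in>p. norm (g (Sup K) - g (Inf K))) < \<epsilon>"
proof -
  obtain \<eta> where \<eta>: "\<eta> > 0" and ac: "\<forall>(n::nat) (l::nat \<Rightarrow> real) (r::nat \<Rightarrow> real).
      (\<forall>k<n. a \<le> l k \<and> l k \<le> r k \<and> r k \<le> b) \<and>
      (\<forall>k<n. \<forall>m<n. k \<noteq> m \<longrightarrow> r k \<le> l m \<or> r m \<le> l k) \<and>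
      (\<Sum>k<n. r k - l k) < \<eta> \<longrightarrow> (\<Sum>k<n. norm (g (r k) - g (l k))) < \<epsilon>"
    using assms unfolding abs_cont_on_interval_def by blast
  have "(\<Sum>(x, K)\<in>p. norm (g (Sup K) - g (Inf K))) < \<epsilon>"
    if p: "p tagged_partial_division_of {a..b}" and small: "(\<Sum>(x, K)\<in>p. Sup K - Inf K) < \<eta>" for p
  proof -
    obtain n :: nat and l r :: "nat \<Rightarrow> real" where lr: "\<forall>k<n. a \<le> l k \<and> l k \<le> r k \<and> r k \<le> b"
      "\<forall>k<n. \<forall>m<n. k \<noteq> m \<longrightarrow> r k \<le> l m \<or> r m \<le> l k"
      and sums: "\<And>f :: real \<Rightarrow> real \<Rightarrow> real. (\<And>y. f y y = 0) \<Longrightarrow>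
        (\<Sum>k<n. f (r k) (l k)) = (\<Sum>(x, K)\<in>p. f (Sup K) (Inf K))"
      using tagged_partial_division_of_real_enumerate[OF p] by blast
    have "(\<Sum>k<n. r k - l k) < \<eta>"
      using sums[of "\<lambda>y z. y - z"] small by simp
    then have "(\<Sum>k<n. norm (g (r k) - g (l k))) < \<epsilon>"
      using ac lr by blast
    then show ?thesis
      using sums[of "\<lambda>y z. norm (g y - g z)"] by simp
  qed
  then show ?thesis
    using that \<eta> by blast
qed

lemma has_real_derivative_nonpos_local_increment:
  assumes "(g has_real_derivative d) (at s)" "d \<le> 0" "\<epsilon> > 0"
  obtains r where "r > 0"
    "\<And>u v. u \<le> s \<Longrightarrow> s \<le> v \<Longrightarrow> s - u < r \<Longrightarrow> v - s < r \<Longrightarrow> g v - g u \<le> \<epsilon> * (v - u)"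
proof -
  have "\<forall>e>0. \<exists>r>0. \<forall>y. norm (y - s) < r \<longrightarrow> norm (g y - g s - d * (y - s)) \<le> e * norm (y - s)"
    using assms(1) unfolding has_field_derivative_def has_derivative_at_alt by blast
  then obtain r where "r > 0"
    and r: "\<forall>y. \<bar>y - s\<bar> < r \<longrightarrow> \<bar>g y - g s - d * (y - s)\<bar> \<le> \<epsilon> * \<bar>y - s\<bar>"
    using assms(3) unfolding real_norm_def by blast
  have "g v - g u \<le> \<epsilon> * (v - u)" if "u \<le> s" "s \<le> v" "s - u < r" "v - s < r" for u v
  proof -
    have "d * (v - s) \<le> 0" "d * (s - u) \<le> 0"
      using that assms(2) by (simp_all add: mult_nonpos_nonneg)
    moreover have "\<bar>g v - g s - d * (v - s)\<bar> \<le> \<epsilon> * (v - s)"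
      using r[rule_format, of v] that by auto
    moreover have "\<bar>g u - g s - d * (u - s)\<bar> \<le> \<epsilon> * (s - u)"
      using r[rule_format, of u] that by auto
    ultimately show ?thesis
      by (simp add: algebra_simps abs_le_iff)
  qed
  then show ?thesis
    using that \<open>r > 0\<close> by blast
qed

lemma tagged_partial_division_of_real_sum_length_le:
  assumes "p tagged_partial_division_of {a..b::real}" "a \<le> b"
  shows "(\<Sum>(x, K)\<in>p. Sup K - Inf K) \<le> b - a"
proof -
  have "\<Union>(snd ` p) \<subseteq> {a..b}"
    using tagged_partial_division_ofD(3)[OF assms(1)] by (auto simp: subset_iff)
  then have "(\<Sum>(x, K)\<in>p. Sup K - Inf K) \<le> measure lebesgue {a..b}"
    by (rule tagged_partial_division_of_real_sum_length_le_measure[OF assms(1)]) simp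
  then show ?thesis
    using assms(2) by simp
qed

lemma abs_cont_on_interval_small_near_negligible:
  assumes ac: "abs_cont_on_interval g a b" and "negligible N" "\<epsilon> > 0"
  obtains T where "open T" "N \<subseteq> T"
    "\<And>P. P tagged_partial_division_of {a..b} \<Longrightarrow> \<Union>(snd ` P) \<subseteq> T \<Longrightarrow>
      (\<Sum>(x, K)\<in>P. norm (g (Sup K) - g (Inf K))) < \<epsilon>"
proof -
  obtain \<eta> where "\<eta> > 0" and small: "\<And>P. P tagged_partial_division_of {a..b} \<Longrightarrow>
      (\<Sum>(x, K)\<in>P. Sup K - Inf K) < \<eta> \<Longrightarrow> (\<Sum>(x, K)\<in>P. norm (g (Sup K) - g (Inf K))) < \<epsilon>"
    using abs_cont_on_interval_tagged_partial_division[OF ac \<open>\<epsilon> > 0\<close>] by blast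
  obtain T where T: "open T" "N \<subseteq> T" "T \<in> lmeasurable" "measure lebesgue T < \<eta>"
    using negligible_imp_open_superset_measure_less[OF \<open>negligible N\<close> \<open>\<eta> > 0\<close>] by blast
  show ?thesis
  proof (rule that[OF T(1,2)])
    fix P assume P: "P tagged_partial_division_of {a..b}" "\<Union>(snd ` P) \<subseteq> T"
    have "(\<Sum>(x, K)\<in>P. Sup K - Inf K) \<le> measure lebesgue T"
      by (rule tagged_partial_division_of_real_sum_length_le_measure[OF P T(3)])
    then have "(\<Sum>(x, K)\<in>P. Sup K - Inf K) < \<eta>"
      using T(4) by linarith
    then show "(\<Sum>(x, K)\<in>P. norm (g (Sup K) - g (Inf K))) < \<epsilon>"
      by (rule small[OF P(1)])
  qed
qed

lemma abs_cont_nonpos_derivative_increment_le: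
  fixes g :: "real \<Rightarrow> real"
  assumes ab: "a \<le> b" and ac: "abs_cont_on_interval g a b" and N: "negligible N"
    and der: "\<forall>s\<in>{a<..<b} - N. \<exists>d. (g has_real_derivative d) (at s) \<and> d \<le> 0"
    and \<epsilon>: "\<epsilon> > 0"
  shows "g b - g a \<le> \<epsilon> * (b - a) + \<epsilon>"
proof -
  \<comment> \<open>The endpoints are tags without derivative information.\<close>
  define N' where "N' = N \<union> {a, b}"
  have "negligible N'"
    unfolding N'_def using N by (simp add: negligible_Un)
  then obtain T where T: "open T" "N' \<subseteq> T" and small: "\<And>P. P tagged_partial_division_of {a..b} \<Longrightarrow>
      \<Union>(snd ` P) \<subseteq> T \<Longrightarrow> (\<Sum>(x, K)\<in>P. norm (g (Sup K) - g (Inf K))) < \<epsilon>"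
    using abs_cont_on_interval_small_near_negligible[OF ac _ \<epsilon>] by blast
  have "\<forall>s\<in>N'. \<exists>\<rho>>0. ball s \<rho> \<subseteq> T"
    using T(1)[unfolded open_contains_ball] T(2) by blast
  from bchoice[OF this] obtain \<rho>N where \<rho>N: "\<forall>s\<in>N'. \<rho>N s > 0 \<and> ball s (\<rho>N s) \<subseteq> T"
    by blast
  have "\<exists>\<rho>>0. \<forall>u v. u \<le> s \<longrightarrow> s \<le> v \<longrightarrow> s - u < \<rho> \<longrightarrow> v - s < \<rho> \<longrightarrow> g v - g u \<le> \<epsilon> * (v - u)"
    if "s \<in> {a<..<b} - N'" for s
  proof -
    have "s \<in> {a<..<b} - N"
      using that unfolding N'_def by blast
    then obtain d where "(g has_real_derivative d) (at s)" "d \<le> 0"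
      using der by blast
    from has_real_derivative_nonpos_local_increment[OF this \<epsilon>] obtain \<rho> where "\<rho> > 0"
      "\<And>u v. u \<le> s \<Longrightarrow> s \<le> v \<Longrightarrow> s - u < \<rho> \<Longrightarrow> v - s < \<rho> \<Longrightarrow> g v - g u \<le> \<epsilon> * (v - u)"
      by blast
    then show ?thesis
      by blast
  qed
  then have "\<forall>s\<in>{a<..<b} - N'. \<exists>\<rho>>0.
      \<forall>u v. u \<le> s \<longrightarrow> s \<le> v \<longrightarrow> s - u < \<rho> \<longrightarrow> v - s < \<rho> \<longrightarrow> g v - g u \<le> \<epsilon> * (v - u)"
    by blast
  from bchoice[OF this] obtain \<rho>D where \<rho>D: "\<forall>s\<in>{a<..<b} - N'. \<rho>D s > 0 \<and>
      (\<forall>u v. u \<le> s \<longrightarrow> s \<le> v \<longrightarrow> s - u < \<rho>D s \<longrightarrow> v - s < \<rho>D s \<longrightarrow> g v - g u \<le> \<epsilon> * (v - u))"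
    by blast
  \<comment> \<open>Intervals tagged in N' lie in T, where absolute continuity bounds their increments;
    at the other tags the derivative does.\<close>
  define \<gamma> where
    "\<gamma> s = ball s (if s \<in> N' then \<rho>N s else if s \<in> {a<..<b} then \<rho>D s else 1)" for s
  have "gauge \<gamma>"
    unfolding gauge_def \<gamma>_def using \<rho>N \<rho>D by auto
  then obtain p where p: "p tagged_division_of {a..b}" "\<gamma> fine p"
    by (metis box_real(2) fine_division_exists)
  then have pp: "p tagged_partial_division_of {a..b}"
    unfolding tagged_division_of_def by blast
  define P where "P = {(x, K)\<in>p. x \<in> N'}"
  have "finite p" "P \<subseteq> p"
    using p(1) unfolding P_def by auto
  have "(\<Sum>(x, K)\<in>p - P. g (Sup K) - g (Inf K)) \<le> (\<Sum>(x, K)\<in>p - P. \<epsilon> * (Sup K - Inf K))"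
  proof (intro sum_mono, clarify)
    fix x K assume xK: "(x, K) \<in> p" "(x, K) \<notin> P"
    obtain u v where uv: "K = {u..v}" "u \<le> x" "x \<le> v" "a \<le> u" "v \<le> b" "Inf K = u" "Sup K = v"
      by (rule tagged_partial_division_of_real_memE[OF pp xK(1)])
    have x: "x \<in> {a<..<b} - N'"
      using xK uv unfolding P_def N'_def by auto
    have "K \<subseteq> ball x (\<rho>D x)"
      using fineD[OF p(2) xK(1)] x unfolding \<gamma>_def by auto
    moreover have "u \<in> K" "v \<in> K"
      using uv by auto
    ultimately have "x - u < \<rho>D x" "v - x < \<rho>D x"
      using uv(2,3) by (auto simp: subset_iff dist_real_def)
    then show "g (Sup K) - g (Inf K) \<le> \<epsilon> * (Sup K - Inf K)"
      using \<rho>D x uv by auto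
  qed
  also have "\<dots> = \<epsilon> * (\<Sum>(x, K)\<in>p - P. Sup K - Inf K)"
    by (simp add: sum_distrib_left case_prod_unfold)
  also have "\<dots> \<le> \<epsilon> * (b - a)"
    using tagged_partial_division_of_real_sum_length_le[OF tagged_partial_division_subset[OF pp] ab] \<epsilon>
    by (simp add: Diff_subset)
  finally have regular: "(\<Sum>(x, K)\<in>p - P. g (Sup K) - g (Inf K)) \<le> \<epsilon> * (b - a)" .
  have "\<Union>(snd ` P) \<subseteq> T"
  proof
    fix z assume "z \<in> \<Union>(snd ` P)"
    then obtain x K where xK: "(x, K) \<in> P" "z \<in> K"
      by auto
    then have "(x, K) \<in> p" "x \<in> N'"
      unfolding P_def by auto
    then have "K \<subseteq> ball x (\<rho>N x)"
      using fineD[OF p(2) \<open>(x, K) \<in> p\<close>] unfolding \<gamma>_def by simp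
    then show "z \<in> T"
      using \<rho>N \<open>x \<in> N'\<close> xK(2) by blast
  qed
  then have "(\<Sum>(x, K)\<in>P. norm (g (Sup K) - g (Inf K))) < \<epsilon>"
    by (rule small[OF tagged_partial_division_subset[OF pp \<open>P \<subseteq> p\<close>]])
  moreover have "(\<Sum>(x, K)\<in>P. g (Sup K) - g (Inf K)) \<le> (\<Sum>(x, K)\<in>P. norm (g (Sup K) - g (Inf K)))"
    by (intro sum_mono) auto
  moreover have "g b - g a = (\<Sum>(x, K)\<in>P. g (Sup K) - g (Inf K)) + (\<Sum>(x, K)\<in>p - P. g (Sup K) - g (Inf K))"
    using additive_tagged_division_1[OF ab p(1), of g]
      sum.subset_diff[OF \<open>P \<subseteq> p\<close> \<open>finite p\<close>, of "\<lambda>(x, K). g (Sup K) - g (Inf K)"]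
    by linarith
  ultimately show ?thesis
    using regular by linarith
qed

lemma abs_cont_nonpos_derivative_imp_le:
  fixes g :: "real \<Rightarrow> real"
  assumes "a \<le> b" "abs_cont_on_interval g a b" "negligible N"
    and "\<forall>s\<in>{a<..<b} - N. \<exists>d. (g has_real_derivative d) (at s) \<and> d \<le> 0"
  shows "g b \<le> g a"
proof (rule ccontr)
  assume increase: "\<not> g b \<le> g a"
  define \<epsilon> where "\<epsilon> = (g b - g a) / (2 * (b - a + 1))"
  have "\<epsilon> > 0"
    using increase assms(1) unfolding \<epsilon>_def by simp
  then have "g b - g a \<le> \<epsilon> * (b - a + 1)"
    using abs_cont_nonpos_derivative_increment_le[OF assms] by (simp add: distrib_left)
  also have "\<dots> = (g b - g a) / 2"
    unfolding \<epsilon>_def using assms(1) by (simp add: field_simps)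
  finally show False
    using increase by simp
qed

lemma abs_cont_on_interval_subinterval:
  assumes "abs_cont_on_interval f a b" "a \<le> c" "d \<le> b"
  shows "abs_cont_on_interval f c d"
  unfolding abs_cont_on_interval_def
proof (intro allI impI)
  fix \<epsilon> :: real assume "\<epsilon> > 0"
  then obtain \<delta> where "\<delta> > 0" and \<delta>: "\<forall>(n::nat) (l::nat \<Rightarrow> real) (r::nat \<Rightarrow> real).
      (\<forall>k<n. a \<le> l k \<and> l k \<le> r k \<and> r k \<le> b) \<and>
      (\<forall>k<n. \<forall>m<n. k \<noteq> m \<longrightarrow> r k \<le> l m \<or> r m \<le> l k) \<and>
      (\<Sum>k<n. r k - l k) < \<delta> \<longrightarrow> (\<Sum>k<n. norm (f (r k) - f (l k))) < \<epsilon>"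
    using assms(1) unfolding abs_cont_on_interval_def by blast
  show "\<exists>\<delta>>0. \<forall>(n::nat) (l::nat \<Rightarrow> real) (r::nat \<Rightarrow> real).
      (\<forall>k<n. c \<le> l k \<and> l k \<le> r k \<and> r k \<le> d) \<and>
      (\<forall>k<n. \<forall>m<n. k \<noteq> m \<longrightarrow> r k \<le> l m \<or> r m \<le> l k) \<and>
      (\<Sum>k<n. r k - l k) < \<delta> \<longrightarrow> (\<Sum>k<n. norm (f (r k) - f (l k))) < \<epsilon>"
  proof (intro exI[of _ \<delta>] conjI allI impI)
    fix n :: nat and l r :: "nat \<Rightarrow> real"
    assume h: "(\<forall>k<n. c \<le> l k \<and> l k \<le> r k \<and> r k \<le> d) \<and>
      (\<forall>k<n. \<forall>m<n. k \<noteq> m \<longrightarrow> r k \<le> l m \<or> r m \<le> l k) \<and> (\<Sum>k<n. r k - l k) < \<delta>"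
    moreover have "\<forall>k<n. a \<le> l k \<and> l k \<le> r k \<and> r k \<le> b"
      using h assms(2,3) by force
    ultimately show "(\<Sum>k<n. norm (f (r k) - f (l k))) < \<epsilon>"
      using \<delta> by blast
  qed (fact \<open>\<delta> > 0\<close>)
qed

lemma abs_cont_on_interval_imp_continuous_on:
  assumes "abs_cont_on_interval f a b"
  shows "continuous_on {a..b} f"
  unfolding continuous_on_iff
proof (intro ballI allI impI)
  fix x e assume x: "x \<in> {a..b}" and e: "(e::real) > 0"
  obtain \<delta> where \<delta>: "\<delta> > 0" "\<forall>(n::nat) (l::nat \<Rightarrow> real) (r::nat \<Rightarrow> real).
      (\<forall>k<n. a \<le> l k \<and> l k \<le> r k \<and> r k \<le> b) \<and>
      (\<forall>k<n. \<forall>m<n. k \<noteq> m \<longrightarrow> r k \<le> l m \<or> r m \<le> l k) \<and>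
      (\<Sum>k<n. r k - l k) < \<delta> \<longrightarrow> (\<Sum>k<n. norm (f (r k) - f (l k))) < e"
    using assms e unfolding abs_cont_on_interval_def by blast
  show "\<exists>d>0. \<forall>x'\<in>{a..b}. dist x' x < d \<longrightarrow> dist (f x') (f x) < e"
  proof (intro exI[of _ \<delta>] conjI ballI impI)
    show "\<delta> > 0" by fact
    fix x' assume x': "x' \<in> {a..b}" "dist x' x < \<delta>"
    define l where "l = (\<lambda>k::nat. min x x')"
    define r where "r = (\<lambda>k::nat. max x x')"
    have "(\<Sum>k<(1::nat). norm (f (r k) - f (l k))) < e"
      using \<delta>(2)[rule_format, of 1 l r] x x' unfolding l_def r_def by (cases "x \<le> x'") (auto simp: dist_real_def)
    then show "dist (f x') (f x) < e"
      unfolding l_def r_def by (cases "x \<le> x'") (auto simp: dist_norm norm_minus_commute)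
  qed
qed

lemma abs_cont_on_interval_dominated:
  fixes f :: "real \<Rightarrow> 'b::real_normed_vector" and \<psi> :: "real \<Rightarrow> 'a::real_normed_vector"
  assumes ac: "abs_cont_on_interval \<psi> a b" and "A \<ge> 0" "B \<ge> 0"
    and dom: "\<And>x y. a \<le> x \<Longrightarrow> x \<le> y \<Longrightarrow> y \<le> b \<Longrightarrow>
      norm (f y - f x) \<le> A * (y - x) + B * norm (\<psi> y - \<psi> x)"
  shows "abs_cont_on_interval f a b"
  unfolding abs_cont_on_interval_def
proof (intro allI impI)
  fix \<epsilon> :: real assume "\<epsilon> > 0"
  define \<epsilon>A where "\<epsilon>A = \<epsilon> / (2 * (A + 1))"
  define \<epsilon>B where "\<epsilon>B = \<epsilon> / (2 * (B + 1))"
  have "\<epsilon>A > 0" "\<epsilon>B > 0" "A * \<epsilon>A < \<epsilon> / 2" "B * \<epsilon>B < \<epsilon> / 2"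
    unfolding \<epsilon>A_def \<epsilon>B_def using \<open>\<epsilon> > 0\<close> \<open>A \<ge> 0\<close> \<open>B \<ge> 0\<close> by (simp_all add: field_simps)
  obtain \<delta> where "\<delta> > 0" and \<delta>: "\<forall>(n::nat) (l::nat \<Rightarrow> real) (r::nat \<Rightarrow> real).
      (\<forall>k<n. a \<le> l k \<and> l k \<le> r k \<and> r k \<le> b) \<and>
      (\<forall>k<n. \<forall>m<n. k \<noteq> m \<longrightarrow> r k \<le> l m \<or> r m \<le> l k) \<and>
      (\<Sum>k<n. r k - l k) < \<delta> \<longrightarrow> (\<Sum>k<n. norm (\<psi> (r k) - \<psi> (l k))) < \<epsilon>B"
    using ac \<open>\<epsilon>B > 0\<close> unfolding abs_cont_on_interval_def by blast
  show "\<exists>\<delta>>0. \<forall>(n::nat) (l::nat \<Rightarrow> real) (r::nat \<Rightarrow> real).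
      (\<forall>k<n. a \<le> l k \<and> l k \<le> r k \<and> r k \<le> b) \<and>
      (\<forall>k<n. \<forall>m<n. k \<noteq> m \<longrightarrow> r k \<le> l m \<or> r m \<le> l k) \<and>
      (\<Sum>k<n. r k - l k) < \<delta> \<longrightarrow> (\<Sum>k<n. norm (f (r k) - f (l k))) < \<epsilon>"
  proof (intro exI[of _ "min \<delta> \<epsilon>A"] conjI allI impI)
    fix n :: nat and l r :: "nat \<Rightarrow> real"
    assume h: "(\<forall>k<n. a \<le> l k \<and> l k \<le> r k \<and> r k \<le> b) \<and>
      (\<forall>k<n. \<forall>m<n. k \<noteq> m \<longrightarrow> r k \<le> l m \<or> r m \<le> l k) \<and> (\<Sum>k<n. r k - l k) < min \<delta> \<epsilon>A"
    then have "(\<Sum>k<n. norm (\<psi> (r k) - \<psi> (l k))) < \<epsilon>B"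
      using \<delta> by auto
    have "(\<Sum>k<n. norm (f (r k) - f (l k))) \<le> (\<Sum>k<n. A * (r k - l k) + B * norm (\<psi> (r k) - \<psi> (l k)))"
      using h dom by (intro sum_mono) auto
    also have "\<dots> = A * (\<Sum>k<n. r k - l k) + B * (\<Sum>k<n. norm (\<psi> (r k) - \<psi> (l k)))"
      by (simp add: sum.distrib sum_distrib_left)
    also have "\<dots> \<le> A * \<epsilon>A + B * \<epsilon>B"
      using h \<open>(\<Sum>k<n. norm (\<psi> (r k) - \<psi> (l k))) < \<epsilon>B\<close> \<open>A \<ge> 0\<close> \<open>B \<ge> 0\<close>
      by (intro add_mono mult_left_mono) auto
    also have "\<dots> < \<epsilon>"
      using \<open>A * \<epsilon>A < \<epsilon> / 2\<close> \<open>B * \<epsilon>B < \<epsilon> / 2\<close> by linarith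
    finally show "(\<Sum>k<n. norm (f (r k) - f (l k))) < \<epsilon>" .
  qed (use \<open>\<delta> > 0\<close> \<open>\<epsilon>A > 0\<close> in simp)
qed

lemma abs_cont_on_interval_affine_minus_inner:
  fixes \<psi> :: "real \<Rightarrow> 'a::real_inner"
  assumes "abs_cont_on_interval \<psi> a b"
  shows "abs_cont_on_interval (\<lambda>t. c * t - inner w (\<psi> t)) a b"
proof (rule abs_cont_on_interval_dominated[OF assms abs_ge_zero norm_ge_zero])
  fix x y :: real assume "x \<le> y"
  have "norm ((c * y - inner w (\<psi> y)) - (c * x - inner w (\<psi> x))) = \<bar>c * (y - x) - inner w (\<psi> y - \<psi> x)\<bar>"
    by (simp add: inner_diff_right algebra_simps)
  also have "\<dots> \<le> \<bar>c * (y - x)\<bar> + \<bar>inner w (\<psi> y - \<psi> x)\<bar>"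
    by (rule abs_triangle_ineq4)
  also have "\<dots> \<le> \<bar>c\<bar> * (y - x) + norm w * norm (\<psi> y - \<psi> x)"
    using Cauchy_Schwarz_ineq2[of w "\<psi> y - \<psi> x"] \<open>x \<le> y\<close> by (simp add: abs_mult)
  finally show "norm ((c * y - inner w (\<psi> y)) - (c * x - inner w (\<psi> x)))
      \<le> \<bar>c\<bar> * (y - x) + norm w * norm (\<psi> y - \<psi> x)" .
qed

lemma abs_cont_mean_slope_mem_closed_convex:
  fixes \<psi> :: "real \<Rightarrow> 'a::euclidean_space"
  assumes ab: "a < b" and ac: "abs_cont_on_interval \<psi> a b" and N: "negligible N"
    and S: "closed S" "convex S"
    and der: "\<forall>s\<in>{a<..<b} - N. \<exists>v. (\<psi> has_vector_derivative v) (at s) \<and> v \<in> S"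
  shows "(\<psi> b - \<psi> a) /\<^sub>R (b - a) \<in> S"
proof (rule ccontr)
  define z where "z = (\<psi> b - \<psi> a) /\<^sub>R (b - a)"
  assume "z \<notin> S"
  then obtain w c where wc: "inner w z < c" "\<forall>x\<in>S. inner w x > c"
    using separating_hyperplane_closed_point[OF S(2,1)] by blast
  define g where "g t = c * t - inner w (\<psi> t)" for t
  have "g b \<le> g a"
  proof (rule abs_cont_nonpos_derivative_imp_le[OF less_imp_le[OF ab] _ N])
    show "abs_cont_on_interval g a b"
      unfolding g_def using abs_cont_on_interval_affine_minus_inner[OF ac] .
    show "\<forall>s\<in>{a<..<b} - N. \<exists>d. (g has_real_derivative d) (at s) \<and> d \<le> 0"
    proof
      fix s assume "s \<in> {a<..<b} - N"
      then obtain v where v: "(\<psi> has_vector_derivative v) (at s)" "v \<in> S"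
        using der by blast
      have "((\<lambda>t. inner w (\<psi> t)) has_real_derivative inner w v) (at s)"
        using bounded_linear.has_vector_derivative[OF bounded_linear_inner_right v(1)]
        by (simp add: has_real_derivative_iff_has_vector_derivative)
      then have "(g has_real_derivative (c - inner w v)) (at s)"
        unfolding g_def by (auto intro!: derivative_eq_intros)
      moreover have "c - inner w v \<le> 0"
        using wc(2) v(2) by force
      ultimately show "\<exists>d. (g has_real_derivative d) (at s) \<and> d \<le> 0"
        by blast
    qed
  qed
  then have "c * (b - a) \<le> inner w (\<psi> b - \<psi> a)"
    unfolding g_def by (simp add: inner_diff_right algebra_simps)
  also have "\<dots> = (b - a) * inner w z"
    unfolding z_def using ab by (simp add: inner_scaleR_right)
  finally have "c \<le> inner w z"
    using ab by (simp add: mult.commute)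
  then show False
    using wc(1) by simp
qed

section \<open>Outer semicontinuous, locally bounded set-valued maps\<close>

lemma osc_relD:
  assumes "osc_rel F C" "x \<in> C" "\<forall>i. xs i \<in> C" "\<forall>i. ys i \<in> F (xs i)" "xs \<longlonglongrightarrow> x" "ys \<longlonglongrightarrow> y"
  shows "y \<in> F x"
  using assms unfolding osc_rel_def by blast

lemma osc_rel_closed_values:
  assumes "osc_rel F C" "x \<in> C"
  shows "closed (F x)"
  unfolding closed_sequential_limits
proof (intro allI impI)
  fix ys l assume h: "(\<forall>n. ys n \<in> F x) \<and> ys \<longlonglongrightarrow> l"
  show "l \<in> F x" using osc_relD[OF assms, of "\<lambda>_. x" ys l] h assms(2) by simp
qed

lemma locbdd_rel_ball_bound:
  assumes "locbdd_rel F C" "x \<in> C"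
  shows "\<exists>r>0. \<exists>M>0. \<forall>z\<in>C. dist z x < r \<longrightarrow> (\<forall>v\<in>F z. norm v \<le> M)"
proof -
  obtain U where U: "open U" "x \<in> U" "bounded (\<Union>z\<in>U \<inter> C. F z)"
    using assms unfolding locbdd_rel_def by blast
  obtain M where M: "M > 0" "\<forall>v\<in>(\<Union>z\<in>U \<inter> C. F z). norm v \<le> M"
    using U(3) bounded_pos by blast
  obtain r where r: "r > 0" "ball x r \<subseteq> U" using U(1,2) open_contains_ball by blast
  have "\<forall>z\<in>C. dist z x < r \<longrightarrow> (\<forall>v\<in>F z. norm v \<le> M)"
  proof (intro ballI impI)
    fix z v assume "z \<in> C" "dist z x < r" "v \<in> F z"
    then have "z \<in> U \<inter> C" using r(2) by (auto simp: dist_commute)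
    then show "norm v \<le> M" using M(2) \<open>v \<in> F z\<close> by blast
  qed
  then show ?thesis using r(1) M(1) by blast
qed

lemma osc_locbdd_rel_upper_semicontinuous:
  fixes F :: "'a::euclidean_space \<Rightarrow> 'a set"
  assumes osc: "osc_rel F C" and lb: "locbdd_rel F C" and xC: "x \<in> C" and e: "\<epsilon> > 0"
  shows "\<exists>\<delta>>0. \<forall>z\<in>C. dist z x < \<delta> \<longrightarrow> (\<forall>v\<in>F z. \<exists>u\<in>F x. dist v u \<le> \<epsilon>)"
proof (rule ccontr)
  assume neg: "\<not> ?thesis"
  obtain r M where rM: "r > 0" "M > 0" "\<forall>z\<in>C. dist z x < r \<longrightarrow> (\<forall>v\<in>F z. norm v \<le> M)"
    using locbdd_rel_ball_bound[OF lb xC] by blast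
  have "\<forall>k::nat. \<exists>z v. z \<in> C \<and> dist z x < min r (1 / (real k + 1)) \<and> v \<in> F z \<and> (\<forall>u\<in>F x. dist v u > \<epsilon>)"
  proof
    fix k :: nat
    have "min r (1 / (real k + 1)) > 0" using rM by simp
    then show "\<exists>z v. z \<in> C \<and> dist z x < min r (1 / (real k + 1)) \<and> v \<in> F z \<and> (\<forall>u\<in>F x. dist v u > \<epsilon>)"
      using neg by (meson not_le)
  qed
  then obtain zs vs where zv: "\<And>k. zs k \<in> C" "\<And>k. dist (zs k) x < min r (1 / (real k + 1))"
      "\<And>k. vs k \<in> F (zs k)" "\<And>k. \<forall>u\<in>F x. dist (vs k) u > \<epsilon>"
    by metis
  have vb: "vs k \<in> cball 0 M" for k using rM(3) zv(1,2,3)[of k] by auto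
  have vb': "\<forall>k. vs k \<in> cball 0 M" using vb by blast
  obtain l \<sigma> where l: "l \<in> cball 0 M" "strict_mono \<sigma>" "(vs \<circ> \<sigma>) \<longlonglongrightarrow> l"
    using seq_compactE[OF compact_imp_seq_compact[OF compact_cball] vb'] by blast
  have zlim: "zs \<longlonglongrightarrow> x"
  proof (rule metric_LIMSEQ_I)
    fix q :: real assume q: "q > 0"
    obtain n0 :: nat where n0: "inverse (real (Suc n0)) < q" using reals_Archimedean[OF q] by blast
    show "\<exists>no. \<forall>n\<ge>no. dist (zs n) x < q"
    proof (intro exI[of _ n0] allI impI)
      fix n assume "n \<ge> n0"
      then have "1 / (real n + 1) \<le> 1 / (real n0 + 1)" by (simp add: frac_le)
      also have "\<dots> < q" using n0 by (simp add: inverse_eq_divide add.commute)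
      finally show "dist (zs n) x < q" using zv(2)[of n] by simp
    qed
  qed
  have "(zs \<circ> \<sigma>) \<longlonglongrightarrow> x" using LIMSEQ_subseq_LIMSEQ[OF zlim l(2)] .
  then have "l \<in> F x"
    using osc_relD[OF osc xC, of "zs \<circ> \<sigma>" "vs \<circ> \<sigma>" l] zv(1,3) l(3) by simp
  then have "\<forall>k. dist ((vs \<circ> \<sigma>) k) l > \<epsilon>" using zv(4) by simp
  moreover have "\<forall>\<^sub>F k in sequentially. dist ((vs \<circ> \<sigma>) k) l < \<epsilon>"
    using l(3) e tendsto_iff by fastforce
  ultimately show False by (metis (mono_tags, lifting) eventually_sequentially less_asym order_refl)
qed

lemma osc_locbdd_rel_compact_img:
  fixes G :: "'a::euclidean_space \<Rightarrow> 'a set"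
  assumes osc: "osc_rel G D" and lb: "locbdd_rel G D" and cD: "compact D'" and sub: "D' \<subseteq> D"
  shows "compact (img G D')"
  unfolding compact_eq_seq_compact_metric seq_compact_def
proof (intro allI impI)
  fix ys :: "nat \<Rightarrow> 'a" assume ys: "\<forall>n. ys n \<in> img G D'"
  then have "\<forall>n. \<exists>d. d \<in> D' \<and> ys n \<in> G d" unfolding img_def by blast
  then obtain ds where ds: "\<And>n. ds n \<in> D'" "\<And>n. ys n \<in> G (ds n)" by metis
  have ds': "\<forall>n. ds n \<in> D'" using ds by blast
  obtain d r1 where d: "d \<in> D'" "strict_mono r1" "(ds \<circ> r1) \<longlonglongrightarrow> d"
    using seq_compactE[OF compact_imp_seq_compact[OF cD] ds'] by blast
  have dD: "d \<in> D" using d(1) sub by blast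
  obtain U where U: "open U" "d \<in> U" "bounded (\<Union>z\<in>U \<inter> D. G z)"
    using lb dD unfolding locbdd_rel_def by blast
  obtain R where R: "R > 0" "\<forall>v\<in>(\<Union>z\<in>U \<inter> D. G z). norm v \<le> R"
    using U(3) bounded_pos by blast
  have "\<forall>\<^sub>F n in sequentially. (ds \<circ> r1) n \<in> U"
    using d(3) U(1,2) topological_tendstoD by blast
  then obtain n0 where n0: "\<And>n. n \<ge> n0 \<Longrightarrow> (ds \<circ> r1) n \<in> U" unfolding eventually_sequentially by blast
  define zs where "zs n = ys (r1 (n + n0))" for n
  have zb: "\<forall>n. zs n \<in> cball 0 R"
  proof
    fix n
    have "ds (r1 (n + n0)) \<in> U \<inter> D" using n0[of "n + n0"] ds(1) sub by auto
    then show "zs n \<in> cball 0 R" unfolding zs_def using R(2) ds(2) by fastforce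
  qed
  obtain y r2 where y: "y \<in> cball 0 R" "strict_mono r2" "(zs \<circ> r2) \<longlonglongrightarrow> y"
    using seq_compactE[OF compact_imp_seq_compact[OF compact_cball] zb] by blast
  define r where "r n = r1 (r2 n + n0)" for n
  have smr: "strict_mono r"
    unfolding r_def strict_mono_def using d(2) y(2) by (simp add: strict_mono_def)
  have sm2: "strict_mono (\<lambda>n. r2 n + n0)" using y(2) by (simp add: strict_mono_def)
  have "((ds \<circ> r1) \<circ> (\<lambda>n. r2 n + n0)) \<longlonglongrightarrow> d" using LIMSEQ_subseq_LIMSEQ[OF d(3) sm2] .
  then have dl: "(ds \<circ> r) \<longlonglongrightarrow> d" unfolding r_def by (simp add: o_def)
  have yl: "(ys \<circ> r) \<longlonglongrightarrow> y" using y(3) unfolding r_def zs_def by (simp add: o_def)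
  have "y \<in> G d"
    using osc_relD[OF osc dD, of "ds \<circ> r" "ys \<circ> r" y] ds sub dl yl by auto
  then have "y \<in> img G D'" unfolding img_def using d(1) by blast
  then show "\<exists>l\<in>img G D'. \<exists>r. strict_mono r \<and> (ys \<circ> r) \<longlonglongrightarrow> l" using smr yl by blast
qed

section \<open>Arcs of the flow\<close>

definition flow_arc :: "'a::real_normed_vector set \<Rightarrow> ('a \<Rightarrow> 'a set) \<Rightarrow> (real \<Rightarrow> 'a) \<Rightarrow> real \<Rightarrow> real \<Rightarrow> bool"
  where "flow_arc C F \<psi> a b \<longleftrightarrow> abs_cont_on_interval \<psi> a b \<and> (\<forall>s\<in>{a<..<b}. \<psi> s \<in> C) \<and>
    (\<exists>N. negligible N \<and> (\<forall>s\<in>{a<..<b} - N. \<exists>v. (\<psi> has_vector_derivative v) (at s) \<and> v \<in> F (\<psi> s)))"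

lemma flow_arc_subinterval:
  assumes "flow_arc C F \<psi> a b" "a \<le> c" "d \<le> b"
  shows "flow_arc C F \<psi> c d"
proof -
  obtain N where "negligible N"
    "\<forall>s\<in>{a<..<b} - N. \<exists>v. (\<psi> has_vector_derivative v) (at s) \<and> v \<in> F (\<psi> s)"
    using assms(1) unfolding flow_arc_def by blast
  moreover have "{c<..<d} \<subseteq> {a<..<b}"
    using assms(2,3) by auto
  ultimately show ?thesis
    using assms abs_cont_on_interval_subinterval unfolding flow_arc_def by blast
qed

lemma flow_arc_mean_slope_mem:
  fixes \<psi> :: "real \<Rightarrow> 'a::euclidean_space"
  assumes "flow_arc C F \<psi> a b" "a < b" "closed S" "convex S"
    and "\<And>s. s \<in> {a<..<b} \<Longrightarrow> F (\<psi> s) \<subseteq> S"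
  shows "(\<psi> b - \<psi> a) /\<^sub>R (b - a) \<in> S"
proof -
  obtain N where "negligible N"
    and N: "\<forall>s\<in>{a<..<b} - N. \<exists>v. (\<psi> has_vector_derivative v) (at s) \<and> v \<in> F (\<psi> s)"
    using assms(1) unfolding flow_arc_def by blast
  have "\<forall>s\<in>{a<..<b} - N. \<exists>v. (\<psi> has_vector_derivative v) (at s) \<and> v \<in> S"
    using N assms(5) by blast
  then show ?thesis
    using abs_cont_mean_slope_mem_closed_convex[OF assms(2) _ \<open>negligible N\<close> assms(3,4)] assms(1)
    unfolding flow_arc_def by blast
qed

lemma flow_arc_increment_le:
  fixes \<psi> :: "real \<Rightarrow> 'a::euclidean_space"
  assumes "flow_arc C F \<psi> a b" "a \<le> b" "\<And>s v. s \<in> {a<..<b} \<Longrightarrow> v \<in> F (\<psi> s) \<Longrightarrow> norm v \<le> M"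
  shows "norm (\<psi> b - \<psi> a) \<le> M * (b - a)"
proof (cases "a = b")
  case False
  then have "(\<psi> b - \<psi> a) /\<^sub>R (b - a) \<in> cball 0 M"
    using assms by (intro flow_arc_mean_slope_mem) auto
  then have "norm (\<psi> b - \<psi> a) / (b - a) \<le> M"
    using assms(2) by (simp add: divide_inverse_commute)
  then show ?thesis
    using assms(2) False by (simp add: pos_divide_le_eq mult.commute)
qed simp

lemma flow_arc_stays_near:
  fixes \<psi> :: "real \<Rightarrow> 'a::euclidean_space"
  assumes arc: "flow_arc C F \<psi> (b - h) b" and "h \<ge> 0"
    and bound: "\<forall>z\<in>C. dist z x < r \<longrightarrow> (\<forall>v\<in>F z. norm v \<le> M)" and "M \<ge> 0"
    and small: "dist (\<psi> b) x + M * h < r"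
  shows "\<forall>s\<in>{b - h..b}. dist (\<psi> s) x \<le> dist (\<psi> b) x + M * (b - s)"
proof -
  have inC: "\<psi> s \<in> C" if "s \<in> {b - h<..<b}" for s
    using arc that unfolding flow_arc_def by blast
  have step: "dist (\<psi> s) x \<le> dist (\<psi> b) x + M * (b - s)"
    if s: "b - h \<le> s" "s \<le> b" and inside: "\<forall>s'\<in>{s<..<b}. dist (\<psi> s') x < r" for s
  proof -
    have "norm (\<psi> b - \<psi> s) \<le> M * (b - s)"
    proof (rule flow_arc_increment_le)
      show "flow_arc C F \<psi> s b"
        using flow_arc_subinterval[OF arc s(1)] by simp
      show "norm v \<le> M" if "s' \<in> {s<..<b}" "v \<in> F (\<psi> s')" for s' v
        using bound inC[of s'] inside that s by auto
    qed (use s in simp)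
    then show ?thesis
      using dist_triangle[of "\<psi> s" x "\<psi> b"] by (simp add: dist_norm norm_minus_commute)
  qed
  \<comment> \<open>The speed bound M holds only within distance r of x, so we rule out a last time at which
    the arc is r-far from x.\<close>
  define A where "A = {s\<in>{b - h..b}. r \<le> dist (\<psi> s) x}"
  have "A = {}"
  proof (rule ccontr)
    assume "A \<noteq> {}"
    have "continuous_on {b - h..b} \<psi>"
      using arc abs_cont_on_interval_imp_continuous_on unfolding flow_arc_def by blast
    then have "closed A"
      unfolding A_def by (intro continuous_on_closed_Collect_le continuous_on_const continuous_on_dist) auto
    moreover have "bdd_above A"
      unfolding A_def by (auto intro: bdd_aboveI[of _ b])
    ultimately have s0: "Sup A \<in> A"
      using closed_contains_Sup \<open>A \<noteq> {}\<close> by blast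
    have "M * h \<ge> 0"
      using \<open>h \<ge> 0\<close> \<open>M \<ge> 0\<close> by simp
    then have "dist (\<psi> b) x < r"
      using small by linarith
    then have "Sup A \<noteq> b"
      using s0 unfolding A_def by auto
    moreover have "dist (\<psi> s') x < r" if "s' \<in> {Sup A<..<b}" for s'
    proof -
      have "s' \<notin> A"
        using that cSup_upper[OF _ \<open>bdd_above A\<close>, of s'] by auto
      then show ?thesis
        using that s0 unfolding A_def by auto
    qed
    ultimately have "dist (\<psi> (Sup A)) x \<le> dist (\<psi> b) x + M * (b - Sup A)"
      using step s0 unfolding A_def by auto
    also have "\<dots> \<le> dist (\<psi> b) x + M * h"
      using s0 \<open>M \<ge> 0\<close> unfolding A_def by (auto intro: mult_left_mono)
    finally show False
      using small s0 unfolding A_def by auto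
  qed
  show ?thesis
  proof
    fix s assume s: "s \<in> {b - h..b}"
    have "dist (\<psi> s') x < r" if "s' \<in> {s<..<b}" for s'
    proof -
      have "s' \<in> {b - h..b}"
        using that s by auto
      then show ?thesis
        using \<open>A = {}\<close> unfolding A_def by auto
    qed
    then show "dist (\<psi> s) x \<le> dist (\<psi> b) x + M * (b - s)"
      using step s by auto
  qed
qed

lemma flow_arc_mean_slope_near:
  fixes F :: "'a::euclidean_space \<Rightarrow> 'a set"
  assumes osc: "osc_rel F C" and lb: "locbdd_rel F C" and xC: "x \<in> C" and cvx: "convex (F x)"
    and \<epsilon>: "\<epsilon> > 0"
  obtains \<delta> where "\<delta> > 0"
    "\<And>\<psi> a b. flow_arc C F \<psi> a b \<Longrightarrow> a < b \<Longrightarrow> \<forall>s\<in>{a<..<b}. dist (\<psi> s) x < \<delta> \<Longrightarrow>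
      \<exists>u\<in>F x. dist ((\<psi> b - \<psi> a) /\<^sub>R (b - a)) u \<le> \<epsilon>"
proof -
  obtain \<delta> where "\<delta> > 0" and \<delta>: "\<forall>z\<in>C. dist z x < \<delta> \<longrightarrow> (\<forall>v\<in>F z. \<exists>u\<in>F x. dist v u \<le> \<epsilon>)"
    using osc_locbdd_rel_upper_semicontinuous[OF osc lb xC \<epsilon>] by blast
  define S where "S = (\<Union>u\<in>F x. \<Union>v\<in>cball 0 \<epsilon>. {u + v})"
  have "closed S"
    unfolding S_def using closed_compact_sums[OF osc_rel_closed_values[OF osc xC] compact_cball] .
  have "convex S"
    unfolding S_def using convex_sums[OF cvx convex_cball] by simp
  have "\<exists>u\<in>F x. dist ((\<psi> b - \<psi> a) /\<^sub>R (b - a)) u \<le> \<epsilon>"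
    if arc: "flow_arc C F \<psi> a b" "a < b" and near: "\<forall>s\<in>{a<..<b}. dist (\<psi> s) x < \<delta>" for \<psi> a b
  proof -
    have "(\<psi> b - \<psi> a) /\<^sub>R (b - a) \<in> S"
    proof (rule flow_arc_mean_slope_mem[OF arc \<open>closed S\<close> \<open>convex S\<close>])
      fix s assume s: "s \<in> {a<..<b}"
      then have "\<psi> s \<in> C"
        using arc(1) unfolding flow_arc_def by blast
      show "F (\<psi> s) \<subseteq> S"
      proof
        fix v assume "v \<in> F (\<psi> s)"
        then obtain u where "u \<in> F x" "dist v u \<le> \<epsilon>"
          using \<delta> \<open>\<psi> s \<in> C\<close> near s by blast
        moreover have "v = u + (v - u)"
          by simp
        moreover have "v - u \<in> cball 0 \<epsilon>"
          using \<open>dist v u \<le> \<epsilon>\<close> by (simp add: dist_norm norm_minus_commute)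
        ultimately show "v \<in> S"
          unfolding S_def by blast
      qed
    qed
    then obtain u v where "u \<in> F x" "norm v \<le> \<epsilon>" "(\<psi> b - \<psi> a) /\<^sub>R (b - a) = u + v"
      unfolding S_def by auto
    then show ?thesis
      by (metis add_diff_cancel_left' dist_norm)
  qed
  then show ?thesis
    using that \<open>\<delta> > 0\<close> by blast
qed

lemma flow_arc_short_stays_near:
  fixes F :: "'a::euclidean_space \<Rightarrow> 'a set"
  assumes lb: "locbdd_rel F C" and xC: "x \<in> C"
  obtains K \<eta> where "K > 0" "\<eta> > 0"
    "\<And>\<psi> b h s. flow_arc C F \<psi> (b - h) b \<Longrightarrow> 0 \<le> h \<Longrightarrow> h \<le> \<eta> \<Longrightarrow> dist (\<psi> b) x \<le> h\<^sup>2 \<Longrightarrow>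
      s \<in> {b - h..b} \<Longrightarrow> dist (\<psi> s) x \<le> K * h"
proof -
  obtain r M where "r > 0" "M > 0" and bound: "\<forall>z\<in>C. dist z x < r \<longrightarrow> (\<forall>v\<in>F z. norm v \<le> M)"
    using locbdd_rel_ball_bound[OF lb xC] by blast
  define \<eta> where "\<eta> = min 1 (r / (2 * (M + 1)))"
  have "\<eta> > 0"
    unfolding \<eta>_def using \<open>r > 0\<close> \<open>M > 0\<close> by simp
  have "dist (\<psi> s) x \<le> (M + 1) * h"
    if arc: "flow_arc C F \<psi> (b - h) b" and h: "0 \<le> h" "h \<le> \<eta>" and close: "dist (\<psi> b) x \<le> h\<^sup>2"
      and s: "s \<in> {b - h..b}" for \<psi> b h s
  proof -
    have "h\<^sup>2 \<le> h"
      using h unfolding \<eta>_def by (simp add: power2_eq_square mult_left_le)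
    then have "dist (\<psi> b) x + M * h \<le> (M + 1) * h"
      using close by (simp add: algebra_simps)
    also have "\<dots> \<le> (M + 1) * (r / (2 * (M + 1)))"
      using h \<open>M > 0\<close> unfolding \<eta>_def by (intro mult_left_mono) auto
    also have "\<dots> = r / 2"
      using \<open>M > 0\<close> by (simp add: field_simps)
    also have "\<dots> < r"
      using \<open>r > 0\<close> by simp
    finally have "\<forall>s\<in>{b - h..b}. dist (\<psi> s) x \<le> dist (\<psi> b) x + M * (b - s)"
      using flow_arc_stays_near[OF arc h(1) bound] \<open>M > 0\<close> by simp
    then have "dist (\<psi> s) x \<le> dist (\<psi> b) x + M * (b - s)"
      using s by blast
    also have "\<dots> \<le> dist (\<psi> b) x + M * h"
      using s \<open>M > 0\<close> by (simp add: mult_left_mono)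
    also have "\<dots> \<le> (M + 1) * h"
      using close \<open>h\<^sup>2 \<le> h\<close> by (simp add: algebra_simps)
    finally show ?thesis .
  qed
  moreover have "M + 1 > 0"
    using \<open>M > 0\<close> by simp
  ultimately show ?thesis
    using that \<open>\<eta> > 0\<close> by blast
qed

lemma flow_arcs_difference_quotient_limit:
  fixes F :: "'a::euclidean_space \<Rightarrow> 'a set"
  assumes osc: "osc_rel F C" and lb: "locbdd_rel F C" and xC: "x \<in> C" and cvx: "convex (F x)"
    and arcs: "\<And>k. flow_arc C F (\<psi> k) (b k - h k) (b k)" and h_pos: "\<And>k. h k > 0" and "h \<longlonglongrightarrow> 0"
    and ends: "\<And>k. dist (\<psi> k (b k)) x \<le> (h k)\<^sup>2"
    and stay: "\<And>k s. s \<in> {b k - h k..b k} \<Longrightarrow> dist (\<psi> k s) x \<le> K * h k"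
    and lim: "(\<lambda>k. (\<psi> k (b k - h k) - x) /\<^sub>R h k) \<longlonglongrightarrow> w0"
  shows "- w0 \<in> F x"
proof -
  define w where "w k = (\<psi> k (b k - h k) - x) /\<^sub>R h k" for k
  have "\<exists>u\<in>F x. dist u (- w0) < e" if "e > 0" for e
  proof -
    define \<epsilon> where "\<epsilon> = e / 3"
    have "\<epsilon> > 0"
      unfolding \<epsilon>_def using \<open>e > 0\<close> by simp
    obtain \<delta> where "\<delta> > 0" and \<delta>: "\<And>\<psi> a b. flow_arc C F \<psi> a b \<Longrightarrow> a < b \<Longrightarrow>
        \<forall>s\<in>{a<..<b}. dist (\<psi> s) x < \<delta> \<Longrightarrow> \<exists>u\<in>F x. dist ((\<psi> b - \<psi> a) /\<^sub>R (b - a)) u \<le> \<epsilon>"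
      using flow_arc_mean_slope_near[OF osc lb xC cvx \<open>\<epsilon> > 0\<close>] by blast
    have "(\<lambda>k. K * h k) \<longlonglongrightarrow> 0"
      using tendsto_mult_right_zero[OF \<open>h \<longlonglongrightarrow> 0\<close>] .
    then have "\<forall>\<^sub>F k in sequentially. h k < \<epsilon> \<and> K * h k < \<delta> \<and> dist (w k) w0 < \<epsilon>"
      using \<open>h \<longlonglongrightarrow> 0\<close> lim \<open>\<epsilon> > 0\<close> \<open>\<delta> > 0\<close> unfolding w_def
      by (intro eventually_conj order_tendstoD(2) tendstoD) auto
    then obtain k where k: "h k < \<epsilon>" "K * h k < \<delta>" "dist (w k) w0 < \<epsilon>"
      unfolding eventually_sequentially by blast
    have "b k - h k < b k"
      using h_pos[of k] by simp
    moreover have "\<forall>s\<in>{b k - h k<..<b k}. dist (\<psi> k s) x < \<delta>"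
    proof
      fix s assume "s \<in> {b k - h k<..<b k}"
      then have "dist (\<psi> k s) x \<le> K * h k"
        by (intro stay) auto
      then show "dist (\<psi> k s) x < \<delta>"
        using k(2) by linarith
    qed
    ultimately obtain u where "u \<in> F x"
      and u: "dist ((\<psi> k (b k) - \<psi> k (b k - h k)) /\<^sub>R h k) u \<le> \<epsilon>"
      using \<delta>[OF arcs[of k]] by auto
    \<comment> \<open>Ending within h^2 of x makes this term vanish in the limit.\<close>
    define q where "q = (\<psi> k (b k) - x) /\<^sub>R h k"
    have "norm q = dist (\<psi> k (b k)) x / h k"
      using h_pos[of k] by (simp add: q_def dist_norm divide_inverse_commute)
    also have "\<dots> \<le> h k"
      using ends[of k] h_pos[of k] by (simp add: pos_divide_le_eq power2_eq_square)
    finally have "norm q \<le> h k" .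
    have "- w k = (\<psi> k (b k) - \<psi> k (b k - h k)) /\<^sub>R h k - q"
      unfolding w_def q_def by (simp add: algebra_simps)
    then have "dist u (- w k) \<le> dist u ((\<psi> k (b k) - \<psi> k (b k - h k)) /\<^sub>R h k) + norm q"
      using dist_triangle[of u "- w k" "(\<psi> k (b k) - \<psi> k (b k - h k)) /\<^sub>R h k"]
      by (simp add: dist_norm)
    moreover have "dist (- w k) (- w0) = dist (w k) w0"
      by (simp add: dist_norm norm_minus_commute)
    moreover have "dist u (- w0) \<le> dist u (- w k) + dist (- w k) (- w0)"
      by (rule dist_triangle)
    ultimately have "dist u (- w0) < \<epsilon> + \<epsilon> + \<epsilon>"
      using u k(1,3) \<open>norm q \<le> h k\<close> by (simp add: dist_commute)
    then show ?thesis
      using \<open>u \<in> F x\<close> unfolding \<epsilon>_def by auto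
  qed
  then have "- w0 \<in> closure (F x)"
    unfolding closure_approachable by blast
  then show ?thesis
    using osc_rel_closed_values[OF osc xC] by simp
qed

lemma tangent_coneI:
  assumes "\<And>i. t i > 0" "\<And>i. x + t i *\<^sub>R w i \<in> C" "t \<longlonglongrightarrow> 0" "w \<longlonglongrightarrow> v"
  shows "v \<in> tangent_cone C x"
  unfolding tangent_cone_def
  by (intro CollectI exI[of _ t] exI[of _ w] conjI allI) (use assms in auto)

lemma flow_arc_end_bounded_away:
  fixes F :: "'a::euclidean_space \<Rightarrow> 'a set"
  assumes osc: "osc_rel F C" and lb: "locbdd_rel F C" and xC: "x \<in> C" and cvx: "convex (F x)"
    and tc: "uminus ` F x \<inter> tangent_cone C x = {}" and "L > 0"
  obtains \<rho> where "\<rho> > 0" "\<And>\<psi> b. flow_arc C F \<psi> (b - L) b \<Longrightarrow> \<rho> \<le> dist (\<psi> b) x"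
proof -
  obtain K \<eta> where "K > 0" "\<eta> > 0" and stay: "\<And>\<psi> b h s. flow_arc C F \<psi> (b - h) b \<Longrightarrow> 0 \<le> h \<Longrightarrow>
      h \<le> \<eta> \<Longrightarrow> dist (\<psi> b) x \<le> h\<^sup>2 \<Longrightarrow> s \<in> {b - h..b} \<Longrightarrow> dist (\<psi> s) x \<le> K * h"
    using flow_arc_short_stays_near[OF lb xC] by blast
  define h where "h k = min \<eta> (L / 2) * inverse (real (Suc k))" for k
  have h: "0 < h k" "h k \<le> \<eta>" "h k < L" for k
  proof -
    have "inverse (real (Suc k)) \<le> 1" "inverse (real (Suc k)) > 0"
      by (simp_all add: inverse_le_1_iff)
    then show "0 < h k" "h k \<le> \<eta>" "h k < L"
      unfolding h_def using \<open>\<eta> > 0\<close> \<open>L > 0\<close>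
      by (auto intro: mult_le_one order.trans[OF mult_left_le] order.strict_trans1[OF mult_left_le])
  qed
  have "h \<longlonglongrightarrow> 0"
    unfolding h_def by (intro tendsto_mult_right_zero LIMSEQ_inverse_real_of_nat)
  have "\<exists>\<rho>>0. \<forall>\<psi> b. flow_arc C F \<psi> (b - L) b \<longrightarrow> \<rho> \<le> dist (\<psi> b) x"
  proof (rule ccontr)
    assume "\<not> (\<exists>\<rho>>0. \<forall>\<psi> b. flow_arc C F \<psi> (b - L) b \<longrightarrow> \<rho> \<le> dist (\<psi> b) x)"
    then have "\<forall>k. \<exists>\<psi> b. flow_arc C F \<psi> (b - L) b \<and> dist (\<psi> b) x < (h k)\<^sup>2"
      using h(1) by (metis not_le zero_less_power)
    then obtain \<psi> b where arc: "\<And>k. flow_arc C F (\<psi> k) (b k - L) (b k)"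
      and ends: "\<And>k. dist (\<psi> k (b k)) x < (h k)\<^sup>2"
      by metis
    have short: "flow_arc C F (\<psi> k) (b k - h k) (b k)" for k
      using flow_arc_subinterval[OF arc] h(3)[of k] by simp
    have near: "dist (\<psi> k s) x \<le> K * h k" if "s \<in> {b k - h k..b k}" for k s
      using stay[OF short] h[of k] ends[of k] that by (simp add: less_imp_le)
    define w where "w k = (\<psi> k (b k - h k) - x) /\<^sub>R h k" for k
    have "w k \<in> cball 0 K" for k
    proof -
      have "norm (w k) = dist (\<psi> k (b k - h k)) x / h k"
        using h(1)[of k] by (simp add: w_def dist_norm divide_inverse_commute)
      also have "\<dots> \<le> K"
        using near[of "b k - h k" k] h(1)[of k] by (simp add: pos_divide_le_eq)
      finally show ?thesis
        by simp
    qed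
    then obtain w0 \<sigma> where "strict_mono \<sigma>" and w0: "(w \<circ> \<sigma>) \<longlonglongrightarrow> w0"
      using compact_cball[THEN compact_imp_seq_compact, unfolded seq_compact_def] by metis
    have h\<sigma>: "(h \<circ> \<sigma>) \<longlonglongrightarrow> 0"
      using LIMSEQ_subseq_LIMSEQ[OF \<open>h \<longlonglongrightarrow> 0\<close> \<open>strict_mono \<sigma>\<close>] .
    have "w0 \<in> tangent_cone C x"
    proof (rule tangent_coneI[OF _ _ h\<sigma> w0])
      fix i
      show "0 < (h \<circ> \<sigma>) i"
        using h(1) by simp
      have "b (\<sigma> i) - h (\<sigma> i) \<in> {b (\<sigma> i) - L<..<b (\<sigma> i)}"
        using h[of "\<sigma> i"] by simp
      then have "\<psi> (\<sigma> i) (b (\<sigma> i) - h (\<sigma> i)) \<in> C"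
        using arc unfolding flow_arc_def by blast
      moreover have "x + h (\<sigma> i) *\<^sub>R w (\<sigma> i) = \<psi> (\<sigma> i) (b (\<sigma> i) - h (\<sigma> i))"
        unfolding w_def using h(1)[of "\<sigma> i"] by simp
      ultimately show "x + (h \<circ> \<sigma>) i *\<^sub>R (w \<circ> \<sigma>) i \<in> C"
        by simp
    qed
    moreover have "- w0 \<in> F x"
    proof (rule flow_arcs_difference_quotient_limit[OF osc lb xC cvx])
      show "flow_arc C F (\<psi> (\<sigma> k)) (b (\<sigma> k) - h (\<sigma> k)) (b (\<sigma> k))" for k
        by (rule short)
      show "dist (\<psi> (\<sigma> k) (b (\<sigma> k))) x \<le> (h (\<sigma> k))\<^sup>2" for k
        using ends less_imp_le by blast
      show "dist (\<psi> (\<sigma> k) s) x \<le> K * h (\<sigma> k)" if "s \<in> {b (\<sigma> k) - h (\<sigma> k)..b (\<sigma> k)}" for k s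
        using near that by blast
      show "(\<lambda>k. (\<psi> (\<sigma> k) (b (\<sigma> k) - h (\<sigma> k)) - x) /\<^sub>R h (\<sigma> k)) \<longlonglongrightarrow> w0"
        using w0 unfolding w_def comp_def .
    qed (use h(1) h\<sigma> in \<open>auto simp: comp_def\<close>)
    ultimately show False
      using tc by (metis disjoint_iff image_eqI minus_minus)
  qed
  then show ?thesis
    using that by blast
qed

lemma flow_arc_end_uniformly_bounded_away:
  fixes F :: "'a::euclidean_space \<Rightarrow> 'a set"
  assumes osc: "osc_rel F C" and lb: "locbdd_rel F C" and K: "compact K" "K \<subseteq> C"
    and cvx: "\<And>x. x \<in> K \<Longrightarrow> convex (F x)"
    and tc: "\<And>x. x \<in> K \<Longrightarrow> uminus ` F x \<inter> tangent_cone C x = {}" and "L > 0"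
  obtains e where "e > 0" "\<And>\<psi> b y. flow_arc C F \<psi> (b - L) b \<Longrightarrow> y \<in> K \<Longrightarrow> e \<le> dist (\<psi> b) y"
proof -
  have "\<forall>x\<in>K. \<exists>\<rho>>0. \<forall>\<psi> b. flow_arc C F \<psi> (b - L) b \<longrightarrow> \<rho> \<le> dist (\<psi> b) x"
  proof
    fix x assume "x \<in> K"
    then have "x \<in> C"
      using K(2) by blast
    obtain \<rho> where "\<rho> > 0" "\<And>\<psi> b. flow_arc C F \<psi> (b - L) b \<Longrightarrow> \<rho> \<le> dist (\<psi> b) x"
      using flow_arc_end_bounded_away[OF osc lb \<open>x \<in> C\<close> cvx[OF \<open>x \<in> K\<close>] tc[OF \<open>x \<in> K\<close>] \<open>L > 0\<close>]
      by blast
    then show "\<exists>\<rho>>0. \<forall>\<psi> b. flow_arc C F \<psi> (b - L) b \<longrightarrow> \<rho> \<le> dist (\<psi> b) x"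
      by blast
  qed
  from bchoice[OF this] obtain \<rho>
    where \<rho>: "\<forall>x\<in>K. \<rho> x > 0 \<and> (\<forall>\<psi> b. flow_arc C F \<psi> (b - L) b \<longrightarrow> \<rho> x \<le> dist (\<psi> b) x)"
    by blast
  have "K \<subseteq> \<Union>((\<lambda>x. ball x (\<rho> x)) ` K)"
  proof
    fix x assume "x \<in> K"
    then have "x \<in> ball x (\<rho> x)"
      using \<rho> by simp
    then show "x \<in> \<Union>((\<lambda>x. ball x (\<rho> x)) ` K)"
      using \<open>x \<in> K\<close> by blast
  qed
  then obtain e where "e > 0" and e: "\<And>y. y \<in> K \<Longrightarrow> \<exists>B\<in>(\<lambda>x. ball x (\<rho> x)) ` K. ball y e \<subseteq> B"
    using Heine_Borel_lemma[OF K(1)] by blast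
  have "e \<le> dist (\<psi> b) y" if arc: "flow_arc C F \<psi> (b - L) b" and "y \<in> K" for \<psi> b y
  proof (rule ccontr)
    assume "\<not> e \<le> dist (\<psi> b) y"
    then have "\<psi> b \<in> ball y e"
      by (simp add: dist_commute)
    moreover obtain x where "x \<in> K" "ball y e \<subseteq> ball x (\<rho> x)"
      using e \<open>y \<in> K\<close> by blast
    ultimately have "dist (\<psi> b) x < \<rho> x"
      by (auto simp: dist_commute)
    moreover have "\<rho> x \<le> dist (\<psi> b) x"
      using \<rho> \<open>x \<in> K\<close> arc by blast
    ultimately show False
      by simp
  qed
  then show ?thesis
    using that \<open>e > 0\<close> by blast
qed

section \<open>Solutions of the hybrid system\<close>

lemma is_solution_time_domain: "is_solution C F D G E \<phi> \<Longrightarrow> hybrid_time_domain E"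
  unfolding is_solution_def by (elim conjE)

lemma is_solution_abs_cont: "is_solution C F D G E \<phi> \<Longrightarrow> loc_abs_cont_on (\<lambda>t. \<phi> t j) {t. (t, j) \<in> E}"
  unfolding is_solution_def by (elim conjE) (erule allE)

lemma is_solution_flow: "is_solution C F D G E \<phi> \<Longrightarrow> interior {t. (t, j) \<in> E} \<noteq> {} \<Longrightarrow>
    (\<forall>t\<in>interior {t. (t, j) \<in> E}. \<phi> t j \<in> C) \<and>
    (\<exists>N. negligible N \<and> (\<forall>t\<in>interior {t. (t, j) \<in> E} - N.
      \<exists>v. ((\<lambda>s. \<phi> s j) has_vector_derivative v) (at t) \<and> v \<in> F (\<phi> t j)))"
  unfolding is_solution_def by (elim conjE) (erule allE, erule mp)

lemma is_solution_jump: "is_solution C F D G E \<phi> \<Longrightarrow> (t, j) \<in> E \<Longrightarrow> (t, Suc j) \<in> E \<Longrightarrow>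
    \<phi> t j \<in> D \<and> \<phi> t (Suc j) \<in> G (\<phi> t j)"
  unfolding is_solution_def by (elim conjE) (erule allE, erule allE, erule mp, rule conjI)

lemma hybrid_time_domain_last_jump:
  assumes htd: "hybrid_time_domain E" and tE: "(t, Suc j) \<in> E"
  obtains \<tau> where "\<tau> \<le> t" "(\<tau>, j) \<in> E" "\<And>s. s \<in> {\<tau>..t} \<Longrightarrow> (s, Suc j) \<in> E"
proof -
  have "E \<subseteq> {0..} \<times> UNIV"
    using htd unfolding hybrid_time_domain_def by blast
  then have "t \<ge> 0"
    using tE by auto
  have "\<forall>T J. (T, J) \<in> E \<longrightarrow> (\<exists>tt::nat \<Rightarrow> real. tt 0 = 0 \<and> (\<forall>j\<le>J. tt j \<le> tt (Suc j)) \<and>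
      E \<inter> ({0..T} \<times> {..J}) = (\<Union>j\<le>J. {tt j..tt (Suc j)} \<times> {j}))"
    using htd unfolding hybrid_time_domain_def by (elim conjE)
  then obtain tt :: "nat \<Rightarrow> real" where mono: "\<forall>i\<le>Suc j. tt i \<le> tt (Suc i)"
    and E: "E \<inter> ({0..t} \<times> {..Suc j}) = (\<Union>i\<le>Suc j. {tt i..tt (Suc i)} \<times> {i})"
    using tE by blast
  have "(t, Suc j) \<in> E \<inter> ({0..t} \<times> {..Suc j})"
    using tE \<open>t \<ge> 0\<close> by simp
  then have t: "tt (Suc j) \<le> t" "t \<le> tt (Suc (Suc j))"
    unfolding E by auto
  have segment: "(s, i) \<in> E" if "i \<le> Suc j" "tt i \<le> s" "s \<le> tt (Suc i)" for s i
  proof -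
    have "(s, i) \<in> {tt i..tt (Suc i)} \<times> {i}"
      using that by simp
    then have "(s, i) \<in> (\<Union>i\<le>Suc j. {tt i..tt (Suc i)} \<times> {i})"
      using that(1) by (intro UN_I[of i]) auto
    then show ?thesis
      using E by blast
  qed
  show ?thesis
  proof (rule that)
    show "tt (Suc j) \<le> t"
      by (fact t(1))
    show "(tt (Suc j), j) \<in> E"
      using segment[of j "tt (Suc j)"] mono by simp
    show "(s, Suc j) \<in> E" if "s \<in> {tt (Suc j)..t}" for s
      using segment[of "Suc j" s] that t by simp
  qed
qed

lemma is_solution_flow_arc:
  assumes sol: "is_solution C F D G E \<phi>" and "a < b" and dom: "\<And>s. s \<in> {a..b} \<Longrightarrow> (s, j) \<in> E"
  shows "flow_arc C F (\<lambda>s. \<phi> s j) a b"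
proof -
  have "{a<..<b} \<subseteq> interior {s. (s, j) \<in> E}"
    using dom by (intro interior_maximal) auto
  moreover have "{a<..<b} \<noteq> {}"
    using \<open>a < b\<close> by simp
  ultimately have "interior {s. (s, j) \<in> E} \<noteq> {}"
    by blast
  moreover have "{a..b} \<subseteq> {s. (s, j) \<in> E}"
    using dom by blast
  then have "abs_cont_on_interval (\<lambda>s. \<phi> s j) a b"
    using is_solution_abs_cont[OF sol, of j] \<open>a < b\<close> unfolding loc_abs_cont_on_def by simp
  moreover obtain N where "negligible N"
    and N: "\<forall>t\<in>interior {s. (s, j) \<in> E} - N. \<exists>v. ((\<lambda>s. \<phi> s j) has_vector_derivative v) (at t) \<and> v \<in> F (\<phi> t j)"
    and inC: "\<forall>t\<in>interior {s. (s, j) \<in> E}. \<phi> t j \<in> C"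
    using is_solution_flow[OF sol \<open>interior {s. (s, j) \<in> E} \<noteq> {}\<close>] by blast
  ultimately show ?thesis
    unfolding flow_arc_def using \<open>{a<..<b} \<subseteq> interior {s. (s, j) \<in> E}\<close> by blast
qed

lemma solution_near_compact_subset_reaches_it:
  fixes C D :: "'a::euclidean_space set" and F G :: "'a \<Rightarrow> 'a set"
  assumes hbc: "hybrid_basic_conditions C F D G" and GC: "img G D \<subseteq> C"
    and K: "compact K" "K \<subseteq> img G D"
    and tc: "\<forall>x\<in>C \<inter> img G D. uminus ` F x \<inter> tangent_cone C x = {}" and "\<epsilon>4 > 0"
  shows "\<exists>\<epsilon>3>0. \<forall>E \<phi> t j y. is_solution C F D G E \<phi> \<and> (t, j) \<in> E \<and> j \<ge> 1 \<and> y \<in> K \<and>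
           dist (\<phi> t j) y \<le> \<epsilon>3 \<longrightarrow> (\<exists>t'\<in>{t - \<epsilon>4..t}. (t', j) \<in> E \<and> \<phi> t' j \<in> C \<inter> img G D)"
proof -
  have osc: "osc_rel F C" and lb: "locbdd_rel F C" and cvx: "\<forall>x\<in>C. convex (F x)"
    using hbc unfolding hybrid_basic_conditions_def by auto
  have "K \<subseteq> C"
    using K(2) GC by blast
  then have "convex (F x)" "uminus ` F x \<inter> tangent_cone C x = {}" if "x \<in> K" for x
    using that cvx tc K(2) by blast+
  then obtain e where "e > 0"
    and e: "\<And>\<psi> b y. flow_arc C F \<psi> (b - \<epsilon>4) b \<Longrightarrow> y \<in> K \<Longrightarrow> e \<le> dist (\<psi> b) y"
    using flow_arc_end_uniformly_bounded_away[OF osc lb K(1) \<open>K \<subseteq> C\<close> _ _ \<open>\<epsilon>4 > 0\<close>] by blast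
  have "\<exists>t'\<in>{t - \<epsilon>4..t}. (t', j) \<in> E \<and> \<phi> t' j \<in> C \<inter> img G D"
    if sol: "is_solution C F D G E \<phi>" and tE: "(t, j) \<in> E" and "j \<ge> 1" and "y \<in> K"
      and close: "dist (\<phi> t j) y \<le> e / 2" for E \<phi> t j y
  proof -
    obtain i where j: "j = Suc i"
      using \<open>j \<ge> 1\<close> by (cases j) auto
    obtain \<tau> where "\<tau> \<le> t" "(\<tau>, i) \<in> E" and seg: "\<And>s. s \<in> {\<tau>..t} \<Longrightarrow> (s, j) \<in> E"
      using hybrid_time_domain_last_jump[OF is_solution_time_domain[OF sol]] tE unfolding j by blast
    have "(\<tau>, j) \<in> E"
      using seg \<open>\<tau> \<le> t\<close> by simp
    then have "\<phi> \<tau> j \<in> G (\<phi> \<tau> i)" "\<phi> \<tau> i \<in> D"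
      using is_solution_jump[OF sol \<open>(\<tau>, i) \<in> E\<close>] unfolding j by auto
    then have jump: "\<phi> \<tau> j \<in> C \<inter> img G D"
      using GC unfolding img_def by blast
    show ?thesis
    proof (cases "t - \<epsilon>4 \<le> \<tau>")
      case True
      then show ?thesis
        using \<open>\<tau> \<le> t\<close> \<open>(\<tau>, j) \<in> E\<close> jump by auto
    next
      case False
      then have "flow_arc C F (\<lambda>s. \<phi> s j) (t - \<epsilon>4) t"
        using \<open>\<epsilon>4 > 0\<close> by (intro is_solution_flow_arc[OF sol] seg) auto
      then have "e \<le> dist (\<phi> t j) y"
        using e[of "\<lambda>s. \<phi> s j" t] \<open>y \<in> K\<close> by simp
      then show ?thesis
        using close \<open>e > 0\<close> by linarith
    qed
  qed
  then show ?thesis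
    using \<open>e > 0\<close> by (intro exI[of _ "e / 2"]) auto
qed

lemma msum_Bset_imp_dist_le:
  assumes "p \<in> msum S (Bset \<epsilon>)"
  obtains y where "y \<in> S" "dist p y \<le> \<epsilon>"
  using assms unfolding msum_def Bset_def by (auto simp: dist_norm)

lemma proper_img_near_ball_compact:
  fixes G :: "'a::euclidean_space \<Rightarrow> 'a set"
  assumes osc: "osc_rel G D" and lb: "locbdd_rel G D" and "proper_setmap_on G D"
  obtains K where "compact K" "K \<subseteq> img G D"
    "\<And>p y. norm p \<le> R \<Longrightarrow> y \<in> img G D \<Longrightarrow> dist p y \<le> 1 \<Longrightarrow> y \<in> K"
proof
  define D' where "D' = {x\<in>D. G x \<inter> cball 0 (R + 1) \<noteq> {}}"
  have "compact D'" "D' \<subseteq> D"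
    using assms(3) unfolding D'_def proper_setmap_on_def by auto
  then show "compact (img G D')" "img G D' \<subseteq> img G D"
    using osc_locbdd_rel_compact_img[OF osc lb] unfolding img_def by auto
  show "y \<in> img G D'" if "norm p \<le> R" "y \<in> img G D" "dist p y \<le> 1" for p y
  proof -
    obtain x where "x \<in> D" "y \<in> G x"
      using \<open>y \<in> img G D\<close> unfolding img_def by blast
    moreover have "norm y \<le> R + 1"
      using that norm_triangle_ineq3[of y p] by (simp add: dist_norm norm_minus_commute)
    ultimately have "x \<in> D'"
      unfolding D'_def by auto
    then show ?thesis
      using \<open>y \<in> G x\<close> unfolding img_def by blast
  qed
qed

lemma solution_near_jump_set_reaches_it:
  fixes C D :: "'a::euclidean_space set" and F G :: "'a \<Rightarrow> 'a set" and P :: "'a \<Rightarrow> bool"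
  assumes hbc: "hybrid_basic_conditions C F D G" and GC: "img G D \<subseteq> C"
    and tc: "\<forall>x\<in>C \<inter> img G D. uminus ` F x \<inter> tangent_cone C x = {}"
    and K: "compact K" "K \<subseteq> img G D"
    and near_K: "\<And>p y. P p \<Longrightarrow> y \<in> img G D \<Longrightarrow> dist p y \<le> 1 \<Longrightarrow> y \<in> K" and "\<epsilon>4 > 0"
  shows "\<exists>\<epsilon>3>0. \<forall>E \<phi> t j. is_solution C F D G E \<phi> \<and> (t, j) \<in> E \<and> j \<ge> 1 \<and>
           \<phi> t j \<in> msum (C \<inter> img G D) (Bset \<epsilon>3) \<and> P (\<phi> t j) \<longrightarrow>
           (\<exists>t'\<in>{t - \<epsilon>4..t}. (t', j) \<in> E \<and> \<phi> t' j \<in> C \<inter> img G D)"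
proof -
  obtain \<epsilon>3 where "\<epsilon>3 > 0" and \<epsilon>3: "\<forall>E \<phi> t j y. is_solution C F D G E \<phi> \<and> (t, j) \<in> E \<and> j \<ge> 1 \<and>
      y \<in> K \<and> dist (\<phi> t j) y \<le> \<epsilon>3 \<longrightarrow> (\<exists>t'\<in>{t - \<epsilon>4..t}. (t', j) \<in> E \<and> \<phi> t' j \<in> C \<inter> img G D)"
    using solution_near_compact_subset_reaches_it[OF hbc GC K tc \<open>\<epsilon>4 > 0\<close>] by blast
  show ?thesis
  proof (intro exI[of _ "min \<epsilon>3 1"] conjI allI impI)
    fix E \<phi> t j
    assume H: "is_solution C F D G E \<phi> \<and> (t, j) \<in> E \<and> j \<ge> 1 \<and>
      \<phi> t j \<in> msum (C \<inter> img G D) (Bset (min \<epsilon>3 1)) \<and> P (\<phi> t j)"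
    then obtain y where "y \<in> C \<inter> img G D" "dist (\<phi> t j) y \<le> min \<epsilon>3 1"
      using msum_Bset_imp_dist_le by blast
    then have "y \<in> K" "dist (\<phi> t j) y \<le> \<epsilon>3"
      using near_K H by auto
    then show "\<exists>t'\<in>{t - \<epsilon>4..t}. (t', j) \<in> E \<and> \<phi> t' j \<in> C \<inter> img G D"
      using \<epsilon>3 H by blast
  qed (use \<open>\<epsilon>3 > 0\<close> in simp)
qed

theorem lemma2:
  fixes C D :: "'a::euclidean_space set" and F G :: "'a \<Rightarrow> 'a set" and Kbar :: real
  assumes hbc: "hybrid_basic_conditions C F D G"
    and "img G D \<inter> D = {}"
    and "img G D \<subseteq> C"
    and "single_valued_on G D"
    and "proper_setmap_on G D"
    and "\<forall>x\<in>C \<inter> img G D. uminus ` F x \<inter> tangent_cone C x = {}"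
  shows "(bounded D \<longrightarrow>
            (\<forall>\<epsilon>4>0. \<exists>\<epsilon>3>0. \<forall>E \<phi> t j. is_solution C F D G E \<phi> \<and> (t, j) \<in> E \<and> j \<ge> 1 \<and>
               \<phi> t j \<in> msum (C \<inter> img G D) (Bset \<epsilon>3) \<longrightarrow>
               (\<exists>t'\<in>{t - \<epsilon>4..t}. (t', j) \<in> E \<and> \<phi> t' j \<in> C \<inter> img G D)))
       \<and> (\<not> bounded D \<longrightarrow>
            (\<forall>\<epsilon>4>0. \<exists>\<epsilon>3>0. \<forall>E \<phi> t j. is_solution C F D G E \<phi> \<and> (t, j) \<in> E \<and> j \<ge> 1 \<and>
               \<phi> t j \<in> msum (C \<inter> img G D) (Bset \<epsilon>3) \<and> \<phi> t j \<in> Bset Kbar \<longrightarrow>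
               (\<exists>t'\<in>{t - \<epsilon>4..t}. (t', j) \<in> E \<and> \<phi> t' j \<in> C \<inter> img G D)))"
proof -
  have "closed D" and osc: "osc_rel G D" and lb: "locbdd_rel G D"
    using hbc unfolding hybrid_basic_conditions_def by auto
  note reaches = solution_near_jump_set_reaches_it[OF hbc assms(3) assms(6)]
  obtain K where K: "compact K" "K \<subseteq> img G D"
    and near_K: "\<And>p y. norm p \<le> Kbar \<Longrightarrow> y \<in> img G D \<Longrightarrow> dist p y \<le> 1 \<Longrightarrow> y \<in> K"
    using proper_img_near_ball_compact[OF osc lb assms(5)] by blast
  show ?thesis
  proof (intro conjI impI allI)
    fix \<epsilon>4 :: real assume "bounded D" "\<epsilon>4 > 0"
    then have "compact (img G D)"
      using osc_locbdd_rel_compact_img[OF osc lb _ subset_refl] \<open>closed D\<close>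
      by (simp add: compact_eq_bounded_closed)
    from reaches[OF this subset_refl _ \<open>\<epsilon>4 > 0\<close>, of "\<lambda>_. True"]
    show "\<exists>\<epsilon>3>0. \<forall>E \<phi> t j. is_solution C F D G E \<phi> \<and> (t, j) \<in> E \<and> j \<ge> 1 \<and>
          \<phi> t j \<in> msum (C \<inter> img G D) (Bset \<epsilon>3) \<longrightarrow>
          (\<exists>t'\<in>{t - \<epsilon>4..t}. (t', j) \<in> E \<and> \<phi> t' j \<in> C \<inter> img G D)"
      by simp
  next
    fix \<epsilon>4 :: real assume "\<epsilon>4 > 0"
    have "y \<in> K" if "p \<in> Bset Kbar" "y \<in> img G D" "dist p y \<le> 1" for p y
      using near_K that unfolding Bset_def by blast
    from reaches[OF K this \<open>\<epsilon>4 > 0\<close>]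
    show "\<exists>\<epsilon>3>0. \<forall>E \<phi> t j. is_solution C F D G E \<phi> \<and> (t, j) \<in> E \<and> j \<ge> 1 \<and>
          \<phi> t j \<in> msum (C \<inter> img G D) (Bset \<epsilon>3) \<and> \<phi> t j \<in> Bset Kbar \<longrightarrow>
          (\<exists>t'\<in>{t - \<epsilon>4..t}. (t', j) \<in> E \<and> \<phi> t' j \<in> C \<inter> img G D)" .
  qed
qed

end
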